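(* Let $N$ be a positive integer and let $A=(a_{j-k})_{j,k=0}^N$ be an $(N+1)\times(N+1)$ complex self-adjoint Toeplitz matrix (so $a_{-n}=\overline{a_n}$). Let $\mathcal{G}_A$ be the set of functions $f\in L^\infty(\mathbb{T})$ with $\hat f(n)=a_n$ for $n=-N,\dots,N$, and let $c_A=\min\{\|f\|_\infty : f\in\mathcal{G}_A\}$. Then there is a unique function in $\mathcal{G}_A$ of minimum $L^\infty$-norm, and it is an alternating step function of height $c_A$ and order at most $N$ (in the order $0$ case: a constant function whose absolute value is $c_A$).
   Context: $\mathbb{T}$ is the unit circle with normalized Lebesgue measure; $\hat f(n)=\frac{1}{2\pi}\int_0^{2\pi} f(e^{i\theta})e^{-in\theta}\,d\theta$. The minimum defining $c_A$ is attained. For $c>0$ and $n$ a positive integer, an alternating step function of height $c$ and order $n$ is a function in $L^\infty(\mathbb{T})$ that assumes (a.e.) alternately the values $c$ and $-c$ on $2n$ (nondegenerate) subarcs forming a partition of $\mathbb{T}$. An alternating step function of order $0$ is a constant function, and its height is defined to be that constant. *)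

theory Defs
  imports "HOL-Analysis.Analysis" "HOL-Probability.Essential_Supremum"
begin

text \<open>The unit circle is parametrised by the angle \<theta> \<in> [0, 2\<pi>]; functions on T are
  functions real \<Rightarrow> complex, considered on this interval (the endpoint is a null set).\<close>

definition circ :: "real measure" where
  "circ = lebesgue_on {0..2*pi}"

definition linf_norm :: "(real \<Rightarrow> complex) \<Rightarrow> ereal" where
  "linf_norm f = esssup circ (\<lambda>\<theta>. ereal (cmod (f \<theta>)))"

definition in_Linf :: "(real \<Rightarrow> complex) \<Rightarrow> bool" where
  "in_Linf f \<longleftrightarrow> f \<in> borel_measurable circ \<and> linf_norm f < \<infinity>"

definition fourier_coeff :: "(real \<Rightarrow> complex) \<Rightarrow> int \<Rightarrow> complex" where
  "fourier_coeff f n =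
     complex_of_real (1 / (2*pi)) *
       (LINT \<theta>|circ. f \<theta> * exp (- \<i> * of_int n * complex_of_real \<theta>))"

definition G_set :: "(int \<Rightarrow> complex) \<Rightarrow> nat \<Rightarrow> (real \<Rightarrow> complex) set" where
  "G_set a N = {f. in_Linf f \<and> (\<forall>n::int. \<bar>n\<bar> \<le> int N \<longrightarrow> fourier_coeff f n = a n)}"

definition alt_step :: "real \<Rightarrow> nat \<Rightarrow> (real \<Rightarrow> complex) \<Rightarrow> bool" where
  "alt_step c n f \<longleftrightarrow> c > 0 \<and> n \<ge> 1 \<and>
     (\<exists>t::nat \<Rightarrow> real.
        (\<forall>k<2*n. t k < t (Suc k)) \<and> t (2*n) = t 0 + 2*pi \<and>
        (AE \<theta> in circ. \<forall>k<2*n. (\<exists>m::int. t k < \<theta> + 2 * pi * real_of_int m \<and> \<theta> + 2 * pi * real_of_int m < t (Suc k))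
              \<longrightarrow> f \<theta> = complex_of_real ((-1)^k * c)))"

definition const_ae :: "real \<Rightarrow> (real \<Rightarrow> complex) \<Rightarrow> bool" where
  "const_ae c f \<longleftrightarrow> (AE \<theta> in circ. f \<theta> = complex_of_real c)"

end

theory Submission
  imports Defs "HOL-Computational_Algebra.Polynomial"
begin

text \<open>The proof goes through the dual problem. For a real trigonometric polynomial \<open>P\<close> of
  degree at most \<open>N\<close>, self-adjointness makes \<open>L(P) = (1/2\<pi>) \<integral> g P\<close> one and the same real
  number for all \<open>g \<in> G\<^sub>A\<close>, so \<open>L(P) \<le> \<parallel>g\<parallel>\<^sub>\<infinity> \<parallel>P\<parallel>\<^sub>1\<close>. By compactness \<open>L\<close> attains a maximum \<open>M\<close> on
  the unit sphere of \<open>\<parallel>\<cdot>\<parallel>\<^sub>1\<close>, at some \<open>P\<close>. As \<open>P\<close> has only finitely many zeros, the \<open>L\<^sup>1\<close> norm is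
  differentiable at \<open>P\<close>, and the first-order condition says exactly that \<open>f = M sgn P\<close> lies in
  \<open>G\<^sub>A\<close>; since \<open>\<parallel>f\<parallel>\<^sub>\<infinity> = M\<close>, \<open>f\<close> is minimal. If also \<open>\<parallel>g\<parallel>\<^sub>\<infinity> \<le> M\<close>, then equality in
  \<open>Re \<integral> g P \<le> M \<integral> \<bar>P\<bar>\<close> forces \<open>g = M sgn P\<close> almost everywhere. Finally \<open>exp(iN\<theta>) P(\<theta>)\<close> is a
  polynomial of degree \<open>2N\<close> in \<open>exp(i\<theta>)\<close>, so \<open>P\<close> has at most \<open>2N\<close> zeros in a period and \<open>sgn P\<close>
  changes sign an even number \<open>2n \<le> 2N\<close> of times around the circle.\<close>

section \<open>The measure \<open>circ\<close> and essentially bounded functions\<close>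

lemma space_circ [simp]: "space circ = {0..2*pi}"
  by (simp add: circ_def)

lemma finite_measure_circ [simp]: "finite_measure circ"
  unfolding circ_def by (intro finite_measure_lebesgue_on) auto

lemma integral_circ_eq_has_integral:
  fixes f :: "real \<Rightarrow> real"
  assumes "continuous_on {0..2*pi} f" "(f has_integral I) {0..2*pi}"
  shows "(LINT \<theta>|circ. f \<theta>) = I"
proof -
  have "integrable circ f"
    unfolding circ_def using assms(1) by (rule continuous_imp_integrable_real)
  then have "(f has_integral (LINT \<theta>|circ. f \<theta>)) {0..2*pi}"
    unfolding circ_def by (intro has_integral_integral_lebesgue_on) auto
  then show ?thesis using assms(2) has_integral_unique by blast
qed

lemma measure_circ_space: "measure circ (space circ) = 2*pi"
proof -
  have "(LINT \<theta>|circ. 1::real) = 2*pi"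
    by (rule integral_circ_eq_has_integral) (use has_integral_const_real[of "1::real" 0 "2*pi"] in auto)
  then show ?thesis by simp
qed

lemma emeasure_circ_space_nonzero: "emeasure circ (space circ) \<noteq> 0"
  using measure_circ_space finite_measure.emeasure_eq_measure[OF finite_measure_circ] pi_gt_zero
  by simp

lemma integrable_circ_continuous:
  fixes f :: "real \<Rightarrow> 'b::euclidean_space"
  assumes "continuous_on UNIV f"
  shows "integrable circ f"
  unfolding circ_def
  by (rule continuous_imp_integrable_real) (rule continuous_on_subset[OF assms], simp)

lemma borel_measurable_circ_continuous:
  fixes f :: "real \<Rightarrow> 'b::euclidean_space"
  assumes "continuous_on UNIV f"
  shows "f \<in> borel_measurable circ"
  unfolding circ_def
  by (rule continuous_imp_measurable_on_sets_lebesgue[OF continuous_on_subset[OF assms]]) auto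

lemma finite_imp_null_sets_circ: "finite F \<Longrightarrow> F \<subseteq> {0..2*pi} \<Longrightarrow> F \<in> null_sets circ"
  unfolding circ_def
  by (subst null_sets_restrict_space) (auto intro: null_sets_completionI finite_imp_null_set_lborel)

lemma linf_norm_nonneg: "linf_norm f \<ge> 0"
proof -
  have "esssup circ (\<lambda>\<theta>. ereal 0) \<le> esssup circ (\<lambda>\<theta>. ereal (cmod (f \<theta>)))"
    by (rule esssup_mono) auto
  then show ?thesis
    unfolding linf_norm_def using esssup_const[OF emeasure_circ_space_nonzero]
    by (metis zero_ereal_def)
qed

lemma linf_norm_AE_cmod_eq:
  assumes "f \<in> borel_measurable circ" "AE \<theta> in circ. cmod (f \<theta>) = c"
  shows "linf_norm f = ereal c"
proof -
  have "linf_norm f = esssup circ (\<lambda>\<theta>. ereal c)"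
    unfolding linf_norm_def by (rule esssup_AE_cong) (use assms in auto)
  then show ?thesis using esssup_const[OF emeasure_circ_space_nonzero] by simp
qed

lemma in_Linf_AE_bound:
  assumes "in_Linf f"
  shows "AE \<theta> in circ. cmod (f \<theta>) \<le> real_of_ereal (linf_norm f)"
proof -
  have fin: "linf_norm f < \<infinity>" using assms unfolding in_Linf_def by auto
  have "AE \<theta> in circ. ereal (cmod (f \<theta>)) \<le> linf_norm f"
    unfolding linf_norm_def by (rule esssup_AE)
  then show ?thesis
    by (rule eventually_mono) (use fin in \<open>cases "linf_norm f"; auto\<close>)
qed

lemma linf_norm_zero_fun: "linf_norm (\<lambda>_. 0) = 0"
  using linf_norm_AE_cmod_eq[of "\<lambda>_. 0" 0] by (simp add: zero_ereal_def)

lemma AE_eq_0_if_linf_norm_eq_0: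
  assumes "in_Linf g" "linf_norm g = 0"
  shows "AE \<theta> in circ. g \<theta> = 0"
  using in_Linf_AE_bound[OF assms(1)] by (rule eventually_mono) (simp add: assms(2))

lemma integrable_in_Linf_mult:
  fixes h :: "real \<Rightarrow> complex"
  assumes f: "in_Linf f" and h: "continuous_on UNIV h" "\<And>\<theta>. cmod (h \<theta>) \<le> C"
  shows "integrable circ (\<lambda>\<theta>. f \<theta> * h \<theta>)"
proof -
  interpret finite_measure circ by simp
  have "f \<in> borel_measurable circ" using f unfolding in_Linf_def by auto
  moreover have "h \<in> borel_measurable circ" using h(1) by (rule borel_measurable_circ_continuous)
  moreover have "AE \<theta> in circ. cmod (f \<theta> * h \<theta>) \<le> real_of_ereal (linf_norm f) * C"
    using in_Linf_AE_bound[OF f]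
    by (rule eventually_mono) (use h(2) real_of_ereal_pos[OF linf_norm_nonneg] in \<open>auto simp: norm_mult intro: mult_mono\<close>)
  ultimately show ?thesis by (intro integrable_const_bound) auto
qed

lemma integrable_scaleR_in_Linf:
  fixes f :: "real \<Rightarrow> real"
  assumes "in_Linf g" "continuous_on UNIV f" "\<And>\<theta>. \<bar>f \<theta>\<bar> \<le> C"
  shows "integrable circ (\<lambda>\<theta>. f \<theta> *\<^sub>R g \<theta>)"
  unfolding scaleR_conv_of_real
  by (subst mult.commute, rule integrable_in_Linf_mult[OF assms(1)]) (auto intro!: continuous_intros assms)

lemma G_set_in_Linf: "g \<in> G_set a N \<Longrightarrow> in_Linf g"
  unfolding G_set_def by auto

lemma fourier_coeff_of_real:
  fixes F :: "real \<Rightarrow> real"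
  assumes F: "F \<in> borel_measurable circ" "\<And>\<theta>. \<bar>F \<theta>\<bar> \<le> C"
  shows "fourier_coeff (\<lambda>\<theta>. complex_of_real (F \<theta>)) n =
           complex_of_real ((LINT \<theta>|circ. F \<theta> * cos (of_int n * \<theta>)) / (2*pi)) -
           \<i> * complex_of_real ((LINT \<theta>|circ. F \<theta> * sin (of_int n * \<theta>)) / (2*pi))"
proof -
  interpret finite_measure circ by simp
  have int: "integrable circ (\<lambda>\<theta>. F \<theta> * f (of_int n * \<theta>))" if "\<And>t. \<bar>f t\<bar> \<le> 1" "continuous_on UNIV f" for f
  proof (rule integrable_const_bound[where B=C])
    show "AE \<theta> in circ. norm (F \<theta> * f (of_int n * \<theta>)) \<le> C"
    proof (rule AE_I2)
      fix \<theta>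
      have "\<bar>F \<theta>\<bar> * \<bar>f (of_int n * \<theta>)\<bar> \<le> \<bar>F \<theta>\<bar> * 1" by (intro mult_left_mono that(1)) auto
      then show "norm (F \<theta> * f (of_int n * \<theta>)) \<le> C" using F(2)[of \<theta>] by (simp add: abs_mult)
    qed
    show "(\<lambda>\<theta>. F \<theta> * f (of_int n * \<theta>)) \<in> borel_measurable circ"
      using F(1) borel_measurable_circ_continuous[OF continuous_on_compose2[OF that(2)], of "\<lambda>\<theta>. of_int n * \<theta>"]
      by (auto intro!: continuous_intros)
  qed
  have ic: "integrable circ (\<lambda>\<theta>. F \<theta> * cos (of_int n * \<theta>))"
    and isin: "integrable circ (\<lambda>\<theta>. F \<theta> * sin (of_int n * \<theta>))"
    by (rule int; auto intro!: continuous_intros)+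
  have eq: "complex_of_real (F \<theta>) * exp (- \<i> * of_int n * complex_of_real \<theta>) =
          complex_of_real (F \<theta> * cos (of_int n * \<theta>)) - \<i> * complex_of_real (F \<theta> * sin (of_int n * \<theta>))" for \<theta>
    by (simp add: complex_eq_iff Re_exp Im_exp)
  have "(LINT \<theta>|circ. complex_of_real (F \<theta>) * exp (- \<i> * of_int n * complex_of_real \<theta>)) =
      complex_of_real (LINT \<theta>|circ. F \<theta> * cos (of_int n * \<theta>)) - \<i> * complex_of_real (LINT \<theta>|circ. F \<theta> * sin (of_int n * \<theta>))"
    unfolding eq Bochner_Integration.integral_diff[OF integrable_of_real[OF ic] integrable_mult_right[OF integrable_of_real[OF isin]]]
    by (simp only: integral_mult_right_zero integral_complex_of_real)
  then show ?thesis unfolding fourier_coeff_def by (simp add: field_simps)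
qed

section \<open>Trigonometric polynomials\<close>

lemma integral_circ_cos_int:
  fixes m :: int
  shows "(LINT \<theta>|circ. cos (of_int m * \<theta>)) = (if m = 0 then 2*pi else 0)"
proof (cases "m = 0")
  case True
  then show ?thesis using measure_circ_space by simp
next
  case False
  have "((\<lambda>\<theta>. cos (of_int m * \<theta>)) has_integral
          sin (of_int m * (2*pi)) / of_int m - sin (of_int m * 0) / of_int m) {0..2*pi}"
    by (rule fundamental_theorem_of_calculus)
       (use False in \<open>auto intro!: derivative_eq_intros
          simp: has_real_derivative_iff_has_vector_derivative[symmetric]\<close>)
  moreover have "sin (of_int m * (2*pi)) = 0"
    by (metis mult.commute mult.left_commute sin_integer_2pi Ints_of_int)
  ultimately show ?thesis
    using False by (intro integral_circ_eq_has_integral) (auto intro!: continuous_intros)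
qed

lemma integral_circ_sin_int:
  fixes m :: int
  shows "(LINT \<theta>|circ. sin (of_int m * \<theta>)) = 0"
proof (cases "m = 0")
  case False
  have "((\<lambda>\<theta>. sin (of_int m * \<theta>)) has_integral
          - cos (of_int m * (2*pi)) / of_int m - (- cos (of_int m * 0) / of_int m)) {0..2*pi}"
    by (rule fundamental_theorem_of_calculus)
       (use False in \<open>auto intro!: derivative_eq_intros
          simp: has_real_derivative_iff_has_vector_derivative[symmetric]\<close>)
  moreover have "cos (of_int m * (2*pi)) = 1"
    by (metis mult.commute mult.left_commute cos_integer_2pi Ints_of_int)
  ultimately show ?thesis
    using False by (intro integral_circ_eq_has_integral) (auto intro!: continuous_intros)
qed simp

lemma integral_circ_cos_cos:
  fixes j k :: nat
  shows "(LINT \<theta>|circ. cos (real k * \<theta>) * cos (real j * \<theta>)) =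
           (if k = j then (if k = 0 then 2*pi else pi) else 0)"
proof -
  have "cos (real k * \<theta>) * cos (real j * \<theta>) =
          cos (of_int (int k - int j) * \<theta>) / 2 + cos (of_int (int k + int j) * \<theta>) / 2" for \<theta>
    by (simp add: cos_times_cos left_diff_distrib distrib_right add_divide_distrib)
  then have "(LINT \<theta>|circ. cos (real k * \<theta>) * cos (real j * \<theta>)) =
      (LINT \<theta>|circ. cos (of_int (int k - int j) * \<theta>)) / 2 + (LINT \<theta>|circ. cos (of_int (int k + int j) * \<theta>)) / 2"
    by (simp only:, subst Bochner_Integration.integral_add)
       (auto intro!: integrable_circ_continuous continuous_intros)
  then show ?thesis by (simp only: integral_circ_cos_int) auto
qed

lemma integral_circ_sin_sin:
  fixes j k :: nat
  shows "(LINT \<theta>|circ. sin (real k * \<theta>) * sin (real j * \<theta>)) = (if k = j \<and> k \<noteq> 0 then pi else 0)"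
proof -
  have "sin (real k * \<theta>) * sin (real j * \<theta>) =
          cos (of_int (int k - int j) * \<theta>) / 2 - cos (of_int (int k + int j) * \<theta>) / 2" for \<theta>
    by (simp add: sin_times_sin left_diff_distrib distrib_right diff_divide_distrib)
  then have "(LINT \<theta>|circ. sin (real k * \<theta>) * sin (real j * \<theta>)) =
      (LINT \<theta>|circ. cos (of_int (int k - int j) * \<theta>)) / 2 - (LINT \<theta>|circ. cos (of_int (int k + int j) * \<theta>)) / 2"
    by (simp only:, subst Bochner_Integration.integral_diff)
       (auto intro!: integrable_circ_continuous continuous_intros)
  then show ?thesis by (simp only: integral_circ_cos_int) auto
qed

lemma integral_circ_sin_cos:
  fixes j k :: nat
  shows "(LINT \<theta>|circ. sin (real k * \<theta>) * cos (real j * \<theta>)) = 0"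
proof -
  have "sin (real k * \<theta>) * cos (real j * \<theta>) =
          sin (of_int (int k + int j) * \<theta>) / 2 + sin (of_int (int k - int j) * \<theta>) / 2" for \<theta>
    by (simp add: sin_times_cos left_diff_distrib distrib_right add_divide_distrib)
  then have "(LINT \<theta>|circ. sin (real k * \<theta>) * cos (real j * \<theta>)) =
      (LINT \<theta>|circ. sin (of_int (int k + int j) * \<theta>)) / 2 + (LINT \<theta>|circ. sin (of_int (int k - int j) * \<theta>)) / 2"
    by (simp only:, subst Bochner_Integration.integral_add)
       (auto intro!: integrable_circ_continuous continuous_intros)
  then show ?thesis by (simp only: integral_circ_sin_int)
qed

lemma integral_circ_cos_sin:
  fixes j k :: nat
  shows "(LINT \<theta>|circ. cos (real k * \<theta>) * sin (real j * \<theta>)) = 0"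
  using integral_circ_sin_cos[of j k] by (simp add: mult.commute)

definition trig_poly :: "nat \<Rightarrow> (nat \<Rightarrow> real) \<Rightarrow> real \<Rightarrow> real" where
  "trig_poly N x \<theta> = (\<Sum>k\<le>N. x (2*k) * cos (real k * \<theta>) + x (2*k+1) * sin (real k * \<theta>))"

lemma continuous_on_trig_poly [continuous_intros]: "continuous_on S (trig_poly N x)"
  unfolding trig_poly_def by (intro continuous_intros)

lemma borel_measurable_trig_poly [measurable]: "trig_poly N x \<in> borel_measurable circ"
  by (intro borel_measurable_circ_continuous continuous_intros)

lemma integrable_trig_poly [intro]: "integrable circ (trig_poly N x)"
  by (intro integrable_circ_continuous continuous_intros)

lemma integrable_abs_trig_poly [intro]: "integrable circ (\<lambda>\<theta>. \<bar>trig_poly N x \<theta>\<bar>)"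
  by (intro integrable_circ_continuous continuous_intros)

lemma trig_poly_add_scaled:
  "trig_poly N (\<lambda>i. x i + t * y i) \<theta> = trig_poly N x \<theta> + t * trig_poly N y \<theta>"
  unfolding trig_poly_def by (simp add: sum.distrib sum_distrib_left algebra_simps)

lemma trig_poly_scale: "trig_poly N (\<lambda>i. c * x i) \<theta> = c * trig_poly N x \<theta>"
  unfolding trig_poly_def by (simp add: sum_distrib_left algebra_simps)

lemma trig_poly_diff: "trig_poly N (\<lambda>i. x i - y i) \<theta> = trig_poly N x \<theta> - trig_poly N y \<theta>"
  unfolding trig_poly_def by (simp add: sum_subtractf algebra_simps)

lemma trig_poly_periodic: "trig_poly N x (\<theta> + 2*pi*real_of_int m) = trig_poly N x \<theta>"
proof -
  have shift: "real k * (\<theta> + 2*pi*real_of_int m) = real k * \<theta> + 2*pi*real_of_int (int k * m)" for k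
    by (simp add: algebra_simps)
  show ?thesis
    unfolding trig_poly_def shift by (simp add: cos_add sin_add cos_integer_2pi sin_integer_2pi)
qed

lemma abs_trig_poly_le: "\<bar>trig_poly N x \<theta>\<bar> \<le> (\<Sum>i<2*N+2. \<bar>x i\<bar>)"
proof -
  have "\<bar>trig_poly N x \<theta>\<bar> \<le> (\<Sum>k\<le>N. \<bar>x (2*k) * cos (real k * \<theta>) + x (2*k+1) * sin (real k * \<theta>)\<bar>)"
    unfolding trig_poly_def by (rule sum_abs)
  also have "\<dots> \<le> (\<Sum>k\<le>N. \<bar>x (2*k)\<bar> + \<bar>x (2*k+1)\<bar>)"
  proof (rule sum_mono)
    fix k
    have "\<bar>x (2*k) * cos (real k * \<theta>)\<bar> \<le> \<bar>x (2*k)\<bar>" "\<bar>x (2*k+1) * sin (real k * \<theta>)\<bar> \<le> \<bar>x (2*k+1)\<bar>"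
      by (simp_all add: abs_mult mult_left_le)
    then show "\<bar>x (2*k) * cos (real k * \<theta>) + x (2*k+1) * sin (real k * \<theta>)\<bar> \<le> \<bar>x (2*k)\<bar> + \<bar>x (2*k+1)\<bar>"
      by linarith
  qed
  also have "\<dots> = (\<Sum>i<2*N+2. \<bar>x i\<bar>)"
    by (induction N) (auto simp: numeral_eq_Suc)
  finally show ?thesis .
qed

lemma integral_trig_poly_scaleR:
  fixes h :: "real \<Rightarrow> 'a::{banach, second_countable_topology}"
  assumes iC: "\<And>k. integrable circ (\<lambda>\<theta>. cos (real k * \<theta>) *\<^sub>R h \<theta>)"
    and iS: "\<And>k. integrable circ (\<lambda>\<theta>. sin (real k * \<theta>) *\<^sub>R h \<theta>)"
  shows "(LINT \<theta>|circ. trig_poly N x \<theta> *\<^sub>R h \<theta>) =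
    (\<Sum>k\<le>N. x (2*k) *\<^sub>R (LINT \<theta>|circ. cos (real k * \<theta>) *\<^sub>R h \<theta>) +
             x (2*k+1) *\<^sub>R (LINT \<theta>|circ. sin (real k * \<theta>) *\<^sub>R h \<theta>))"
proof -
  let ?C = "\<lambda>k \<theta>. x (2*k) *\<^sub>R (cos (real k * \<theta>) *\<^sub>R h \<theta>)"
  let ?S = "\<lambda>k \<theta>. x (2*k+1) *\<^sub>R (sin (real k * \<theta>) *\<^sub>R h \<theta>)"
  have iC': "integrable circ (?C k)" and iS': "integrable circ (?S k)" for k
    by (intro integrable_scaleR_right iC iS)+
  have "(LINT \<theta>|circ. trig_poly N x \<theta> *\<^sub>R h \<theta>) = (LINT \<theta>|circ. (\<Sum>k\<le>N. ?C k \<theta> + ?S k \<theta>))"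
    unfolding trig_poly_def scaleR_sum_left scaleR_add_left scaleR_scaleR by (simp add: mult.commute)
  also have "\<dots> = (\<Sum>k\<le>N. LINT \<theta>|circ. ?C k \<theta> + ?S k \<theta>)"
    by (rule Bochner_Integration.integral_sum) (use iC' iS' in auto)
  also have "\<dots> = (\<Sum>k\<le>N. x (2*k) *\<^sub>R (LINT \<theta>|circ. cos (real k * \<theta>) *\<^sub>R h \<theta>) +
                              x (2*k+1) *\<^sub>R (LINT \<theta>|circ. sin (real k * \<theta>) *\<^sub>R h \<theta>))"
    unfolding Bochner_Integration.integral_add[OF iC' iS'] integral_scaleR_right ..
  finally show ?thesis .
qed

lemma integral_trig_poly_mult:
  fixes h :: "real \<Rightarrow> real"
  assumes "continuous_on UNIV h"
  shows "(LINT \<theta>|circ. trig_poly N x \<theta> * h \<theta>) =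
    (\<Sum>k\<le>N. x (2*k) * (LINT \<theta>|circ. cos (real k * \<theta>) * h \<theta>) +
             x (2*k+1) * (LINT \<theta>|circ. sin (real k * \<theta>) * h \<theta>))"
  using integral_trig_poly_scaleR[of h N x]
  by (simp add: integrable_circ_continuous continuous_intros assms)

lemma integral_trig_poly_cos:
  assumes "j \<le> N"
  shows "(LINT \<theta>|circ. trig_poly N x \<theta> * cos (real j * \<theta>)) = x (2*j) * (if j = 0 then 2*pi else pi)"
proof -
  have "(LINT \<theta>|circ. trig_poly N x \<theta> * cos (real j * \<theta>)) =
          (\<Sum>k\<le>N. x (2*k) * (LINT \<theta>|circ. cos (real k * \<theta>) * cos (real j * \<theta>)) +
                   x (2*k+1) * (LINT \<theta>|circ. sin (real k * \<theta>) * cos (real j * \<theta>)))"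
    by (rule integral_trig_poly_mult) (intro continuous_intros)
  also have "\<dots> = (\<Sum>k\<le>N. if k = j then x (2*j) * (if j = 0 then 2*pi else pi) else 0)"
    by (intro sum.cong) (auto simp: integral_circ_cos_cos integral_circ_sin_cos)
  finally show ?thesis using assms by (simp add: sum.delta)
qed

lemma integral_trig_poly_sin:
  assumes "j \<le> N" "j \<noteq> 0"
  shows "(LINT \<theta>|circ. trig_poly N x \<theta> * sin (real j * \<theta>)) = x (2*j+1) * pi"
proof -
  have "(LINT \<theta>|circ. trig_poly N x \<theta> * sin (real j * \<theta>)) =
          (\<Sum>k\<le>N. x (2*k) * (LINT \<theta>|circ. cos (real k * \<theta>) * sin (real j * \<theta>)) +
                   x (2*k+1) * (LINT \<theta>|circ. sin (real k * \<theta>) * sin (real j * \<theta>)))"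
    by (rule integral_trig_poly_mult) (intro continuous_intros)
  also have "\<dots> = (\<Sum>k\<le>N. if k = j then x (2*j+1) * pi else 0)"
    using assms(2) by (intro sum.cong) (auto simp: integral_circ_sin_sin integral_circ_cos_sin)
  finally show ?thesis using assms by (simp add: sum.delta)
qed

definition trig_poly_cpoly :: "nat \<Rightarrow> (nat \<Rightarrow> real) \<Rightarrow> complex poly" where
  "trig_poly_cpoly N x =
     (\<Sum>k\<le>N. monom ((complex_of_real (x (2*k)) - \<i> * complex_of_real (x (2*k+1))) / 2) (N+k)
           + monom ((complex_of_real (x (2*k)) + \<i> * complex_of_real (x (2*k+1))) / 2) (N-k))"

lemma degree_trig_poly_cpoly: "degree (trig_poly_cpoly N x) \<le> 2*N"
  unfolding trig_poly_cpoly_def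
  by (intro degree_sum_le degree_add_le order.trans[OF degree_monom_le]) auto

lemma poly_trig_poly_cpoly:
  "poly (trig_poly_cpoly N x) (cis \<theta>) = complex_of_real (trig_poly N x \<theta>) * cis \<theta> ^ N"
proof -
  have summand: "(complex_of_real (x (2*k)) - \<i> * complex_of_real (x (2*k+1))) / 2 * cis \<theta> ^ (N+k)
            + (complex_of_real (x (2*k)) + \<i> * complex_of_real (x (2*k+1))) / 2 * cis \<theta> ^ (N-k) =
         complex_of_real (x (2*k) * cos (real k * \<theta>) + x (2*k+1) * sin (real k * \<theta>)) * cis \<theta> ^ N"
    if "k \<le> N" for k
  proof -
    have up: "cis \<theta> ^ (N+k) = cis \<theta> ^ N * cis (real k * \<theta>)"
      by (simp add: power_add Complex.DeMoivre)
    have "cis \<theta> ^ (N-k) * cis (real k * \<theta>) = cis \<theta> ^ N"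
      using that by (metis Complex.DeMoivre le_add_diff_inverse2 power_add)
    then have down: "cis \<theta> ^ (N-k) = cis \<theta> ^ N * cis (- (real k * \<theta>))"
      by (metis cis_inverse cis_neq_zero nonzero_eq_divide_eq divide_inverse)
    show ?thesis unfolding up down by (simp add: complex_eq_iff field_simps)
  qed
  show ?thesis
    unfolding trig_poly_cpoly_def poly_sum poly_add poly_monom trig_poly_def of_real_sum sum_distrib_right
    by (intro sum.cong refl summand) auto
qed

lemma cis_inj_on_period:
  assumes "cis s = cis t" "\<bar>s - t\<bar> < 2*pi"
  shows "s = t"
proof -
  have "sin s = sin t \<and> cos s = cos t" using assms(1) by (simp add: complex_eq_iff)
  then obtain n :: int where n: "s = t + 2*pi*n" using sin_cos_eq_iff by blast
  then have "\<bar>real_of_int n\<bar> < 1" using assms(2) pi_gt_zero by (simp add: abs_mult)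
  then show ?thesis using n by simp
qed

lemma trig_poly_zeros_in_period:
  fixes \<alpha> :: real
  assumes "\<exists>t. trig_poly N x t \<noteq> 0"
  defines "Z \<equiv> {\<theta>\<in>{\<alpha><..<\<alpha>+2*pi}. trig_poly N x \<theta> = 0}"
  shows "finite Z" "card Z \<le> 2*N"
proof -
  have nonzero: "trig_poly_cpoly N x \<noteq> 0"
    using assms(1) poly_trig_poly_cpoly[of N x] by force
  have sub: "cis ` Z \<subseteq> {z. poly (trig_poly_cpoly N x) z = 0}"
    unfolding Z_def using poly_trig_poly_cpoly by auto
  have inj: "inj_on cis Z"
    unfolding Z_def by (rule inj_onI, rule cis_inj_on_period) auto
  have roots: "finite {z. poly (trig_poly_cpoly N x) z = 0}"
    using poly_roots_finite[OF nonzero] .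
  show "finite Z" using finite_imageD[OF finite_subset[OF sub roots] inj] .
  have "card Z = card (cis ` Z)" using card_image[OF inj] by simp
  also have "\<dots> \<le> card {z. poly (trig_poly_cpoly N x) z = 0}" using card_mono[OF roots sub] .
  also have "\<dots> \<le> degree (trig_poly_cpoly N x)" using card_poly_roots_bound[OF nonzero] .
  also have "\<dots> \<le> 2*N" by (rule degree_trig_poly_cpoly)
  finally show "card Z \<le> 2*N" .
qed

lemma AE_trig_poly_nonzero:
  assumes "\<exists>t. trig_poly N x t \<noteq> 0"
  shows "AE \<theta> in circ. trig_poly N x \<theta> \<noteq> 0"
proof -
  let ?F = "{\<theta>\<in>{0..2*pi}. trig_poly N x \<theta> = 0}"
  have "?F \<subseteq> {\<theta>\<in>{-1<..<-1+2*pi}. trig_poly N x \<theta> = 0} \<union> {\<theta>\<in>{1<..<1+2*pi}. trig_poly N x \<theta> = 0}"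
    using pi_gt3 by auto
  then have "finite ?F"
    using trig_poly_zeros_in_period(1)[OF assms] by (meson finite_UnI finite_subset)
  then have "?F \<in> null_sets circ" by (intro finite_imp_null_sets_circ) auto
  then show ?thesis by (rule AE_I') auto
qed

section \<open>The dual extremal problem\<close>

text \<open>The coefficient of \<open>sin (0\<theta>)\<close> is fixed to \<open>0\<close>, so that a coefficient vector in
  \<open>trig_coeffs N\<close> is determined by its polynomial.\<close>

definition trig_coeffs :: "nat \<Rightarrow> (nat \<Rightarrow> real) set" where
  "trig_coeffs N = {x. x 1 = 0 \<and> (\<forall>i\<ge>2*N+2. x i = 0)}"

definition trig_L1_norm :: "nat \<Rightarrow> (nat \<Rightarrow> real) \<Rightarrow> real" where
  "trig_L1_norm N x = (LINT \<theta>|circ. \<bar>trig_poly N x \<theta>\<bar>) / (2*pi)"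

definition unit_coeff :: "nat \<Rightarrow> nat \<Rightarrow> real" where
  "unit_coeff j i = (if i = j then 1 else 0)"

lemma trig_coeffs_add_scaled: "x \<in> trig_coeffs N \<Longrightarrow> y \<in> trig_coeffs N \<Longrightarrow> (\<lambda>i. x i + t * y i) \<in> trig_coeffs N"
  by (simp add: trig_coeffs_def)

lemma trig_coeffs_scale: "x \<in> trig_coeffs N \<Longrightarrow> (\<lambda>i. c * x i) \<in> trig_coeffs N"
  by (simp add: trig_coeffs_def)

lemma unit_coeff_cos_in_trig_coeffs: "k \<le> N \<Longrightarrow> unit_coeff (2*k) \<in> trig_coeffs N"
  unfolding unit_coeff_def trig_coeffs_def by auto

lemma unit_coeff_sin_in_trig_coeffs: "k \<le> N \<Longrightarrow> k \<noteq> 0 \<Longrightarrow> unit_coeff (2*k+1) \<in> trig_coeffs N"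
  unfolding unit_coeff_def trig_coeffs_def by auto

lemma trig_poly_unit_coeff_cos:
  assumes "k \<le> N"
  shows "trig_poly N (unit_coeff (2*k)) \<theta> = cos (real k * \<theta>)"
proof -
  have "trig_poly N (unit_coeff (2*k)) \<theta> = (\<Sum>j\<le>N. if j = k then cos (real k * \<theta>) else 0)"
    unfolding trig_poly_def unit_coeff_def by (intro sum.cong refl) auto
  then show ?thesis using assms by simp
qed

lemma trig_poly_unit_coeff_sin:
  assumes "k \<le> N"
  shows "trig_poly N (unit_coeff (2*k+1)) \<theta> = sin (real k * \<theta>)"
proof -
  have "trig_poly N (unit_coeff (2*k+1)) \<theta> = (\<Sum>j\<le>N. if j = k then sin (real k * \<theta>) else 0)"
    unfolding trig_poly_def unit_coeff_def by (intro sum.cong refl) auto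
  then show ?thesis using assms by simp
qed

lemma trig_L1_norm_nonneg: "trig_L1_norm N x \<ge> 0"
  unfolding trig_L1_norm_def by (intro divide_nonneg_pos integral_nonneg_AE) auto

lemma trig_L1_norm_scale: "trig_L1_norm N (\<lambda>i. c * x i) = \<bar>c\<bar> * trig_L1_norm N x"
  unfolding trig_L1_norm_def trig_poly_scale by (simp add: abs_mult)

lemma abs_trig_L1_norm_diff_le:
  "\<bar>trig_L1_norm N x - trig_L1_norm N y\<bar> \<le> (\<Sum>i<2*N+2. \<bar>x i - y i\<bar>)"
proof -
  let ?C = "\<Sum>i<2*N+2. \<bar>x i - y i\<bar>"
  have "\<bar>(LINT \<theta>|circ. \<bar>trig_poly N x \<theta>\<bar>) - (LINT \<theta>|circ. \<bar>trig_poly N y \<theta>\<bar>)\<bar> =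
        \<bar>LINT \<theta>|circ. \<bar>trig_poly N x \<theta>\<bar> - \<bar>trig_poly N y \<theta>\<bar>\<bar>"
    by (subst Bochner_Integration.integral_diff) auto
  also have "\<dots> \<le> (LINT \<theta>|circ. \<bar>\<bar>trig_poly N x \<theta>\<bar> - \<bar>trig_poly N y \<theta>\<bar>\<bar>)"
    using integral_norm_bound[of circ "\<lambda>\<theta>. \<bar>trig_poly N x \<theta>\<bar> - \<bar>trig_poly N y \<theta>\<bar>"] by simp
  also have "\<dots> \<le> (LINT \<theta>|circ. ?C)"
  proof (rule integral_mono)
    fix \<theta>
    have "\<bar>\<bar>trig_poly N x \<theta>\<bar> - \<bar>trig_poly N y \<theta>\<bar>\<bar> \<le> \<bar>trig_poly N (\<lambda>i. x i - y i) \<theta>\<bar>"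
      unfolding trig_poly_diff by linarith
    also have "\<dots> \<le> ?C" by (rule abs_trig_poly_le)
    finally show "\<bar>\<bar>trig_poly N x \<theta>\<bar> - \<bar>trig_poly N y \<theta>\<bar>\<bar> \<le> ?C" .
  qed (auto intro!: integrable_circ_continuous continuous_intros)
  also have "\<dots> = ?C * (2*pi)" using measure_circ_space by simp
  finally show ?thesis
    unfolding trig_L1_norm_def by (simp add: diff_divide_distrib[symmetric] pos_divide_le_eq)
qed

lemma abs_integral_trig_poly_mult_le:
  assumes "continuous_on UNIV h" "\<And>\<theta>. \<bar>h \<theta>\<bar> \<le> 1"
  shows "\<bar>LINT \<theta>|circ. trig_poly N x \<theta> * h \<theta>\<bar> \<le> 2*pi * trig_L1_norm N x"
proof -
  have "\<bar>LINT \<theta>|circ. trig_poly N x \<theta> * h \<theta>\<bar> \<le> (LINT \<theta>|circ. \<bar>trig_poly N x \<theta> * h \<theta>\<bar>)"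
    using integral_norm_bound[of circ "\<lambda>\<theta>. trig_poly N x \<theta> * h \<theta>"] by simp
  also have "\<dots> \<le> (LINT \<theta>|circ. \<bar>trig_poly N x \<theta>\<bar>)"
  proof (rule integral_mono)
    fix \<theta> show "\<bar>trig_poly N x \<theta> * h \<theta>\<bar> \<le> \<bar>trig_poly N x \<theta>\<bar>"
      using assms(2)[of \<theta>] by (simp add: abs_mult mult_left_le)
  qed (auto intro!: integrable_circ_continuous continuous_intros assms(1))
  finally show ?thesis unfolding trig_L1_norm_def by simp
qed

lemma abs_coeff_le_trig_L1_norm:
  assumes "x \<in> trig_coeffs N"
  shows "\<bar>x i\<bar> \<le> 2 * trig_L1_norm N x"
proof -
  have cos: "\<bar>x (2*j)\<bar> \<le> 2 * trig_L1_norm N x" if "j \<le> N" for j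
  proof -
    have "\<bar>x (2*j)\<bar> * (if j = 0 then 2*pi else pi) \<le> 2*pi * trig_L1_norm N x"
      using abs_integral_trig_poly_mult_le[of "\<lambda>\<theta>. cos (real j * \<theta>)" N x]
      by (simp add: integral_trig_poly_cos[OF that] abs_mult continuous_intros)
    moreover have "\<bar>x (2*j)\<bar> * pi \<le> \<bar>x (2*j)\<bar> * (if j = 0 then 2*pi else pi)"
      using pi_gt_zero by (intro mult_left_mono) auto
    ultimately have "\<bar>x (2*j)\<bar> * pi \<le> 2*pi * trig_L1_norm N x" by linarith
    then show ?thesis using pi_gt_zero by (simp add: mult.commute)
  qed
  have sin: "\<bar>x (2*j+1)\<bar> \<le> 2 * trig_L1_norm N x" if "j \<le> N" "j \<noteq> 0" for j
  proof -
    have "\<bar>x (2*j+1)\<bar> * pi \<le> 2*pi * trig_L1_norm N x"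
      using abs_integral_trig_poly_mult_le[of "\<lambda>\<theta>. sin (real j * \<theta>)" N x]
      by (simp add: integral_trig_poly_sin[OF that] abs_mult continuous_intros)
    then show ?thesis using pi_gt_zero by (simp add: mult.commute)
  qed
  have vanish: "\<bar>x i\<bar> \<le> 2 * trig_L1_norm N x" if "i = 1 \<or> 2*N+2 \<le> i"
    using assms that trig_L1_norm_nonneg[of N x] unfolding trig_coeffs_def by auto
  obtain j where j: "i = 2*j \<or> i = 2*j+1" by (metis evenE oddE)
  show ?thesis
  proof (cases "j \<le> N")
    case True
    then show ?thesis using j cos[OF True] sin[OF True] vanish by (cases "j = 0") auto
  qed (use j vanish in auto)
qed

lemma tendsto_trig_L1_norm:
  fixes X :: "nat \<Rightarrow> nat \<Rightarrow> real"
  assumes "X \<longlonglongrightarrow> l"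
  shows "(\<lambda>n. trig_L1_norm N (X n)) \<longlonglongrightarrow> trig_L1_norm N l"
proof -
  have coord: "(\<lambda>n. X n i) \<longlonglongrightarrow> l i" for i
  proof -
    have "isCont (\<lambda>x::nat\<Rightarrow>real. x i) l"
      using continuous_on_product_coordinates[of i] continuous_on_eq_continuous_at[OF open_UNIV]
      by blast
    then show ?thesis using assms isCont_tendsto_compose by blast
  qed
  have "(\<lambda>n. \<Sum>i<2*N+2. \<bar>X n i - l i\<bar>) \<longlonglongrightarrow> (\<Sum>i<2*N+2. \<bar>l i - l i\<bar>)"
    by (intro tendsto_intros coord)
  then have "(\<lambda>n. \<Sum>i<2*N+2. \<bar>X n i - l i\<bar>) \<longlonglongrightarrow> 0" by simp
  then have "(\<lambda>n. trig_L1_norm N (X n) - trig_L1_norm N l) \<longlonglongrightarrow> 0"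
    by (rule Lim_null_comparison[rotated])
       (simp only: real_norm_def abs_trig_L1_norm_diff_le eventually_True)
  then show ?thesis by (rule LIM_zero_cancel)
qed

lemma closed_trig_L1_norm_le: "closed {x. trig_L1_norm N x \<le> c}"
  unfolding closed_sequential_limits
proof (intro allI impI, elim conjE)
  fix X l assume "\<forall>n. X n \<in> {x. trig_L1_norm N x \<le> c}" "X \<longlonglongrightarrow> l"
  then show "l \<in> {x. trig_L1_norm N x \<le> c}"
    using tendsto_trig_L1_norm[of X l N] LIMSEQ_le_const2 by fastforce
qed

lemma compact_trig_L1_ball: "compact (trig_coeffs N \<inter> {x. trig_L1_norm N x \<le> 1})"
proof -
  define bound where "bound i = (if i = 1 \<or> 2*N+2 \<le> i then {0} else {-2..2::real})" for i
  have "compactin (product_topology (\<lambda>i. euclidean) UNIV) (PiE UNIV bound)"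
    unfolding bound_def compactin_PiE by auto
  then have "compact (PiE UNIV bound)" by (simp add: euclidean_product_topology)
  moreover have "trig_coeffs N \<inter> {x. trig_L1_norm N x \<le> 1} = PiE UNIV bound \<inter> {x. trig_L1_norm N x \<le> 1}"
  proof (intro equalityI subsetI)
    fix x assume x: "x \<in> trig_coeffs N \<inter> {x. trig_L1_norm N x \<le> 1}"
    then have "x i \<in> {-2..2}" for i using abs_coeff_le_trig_L1_norm[of x N i] by (auto simp: abs_le_iff)
    then have "x i \<in> bound i" for i
      using x unfolding bound_def trig_coeffs_def by auto
    then show "x \<in> PiE UNIV bound \<inter> {x. trig_L1_norm N x \<le> 1}" using x by (simp add: PiE_iff)
  next
    fix x assume x: "x \<in> PiE UNIV bound \<inter> {x. trig_L1_norm N x \<le> 1}"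
    then have "x i \<in> bound i" for i by (simp add: PiE_iff)
    then have "x 1 = 0" "\<forall>i\<ge>2*N+2. x i = 0" unfolding bound_def by (metis singletonD)+
    then show "x \<in> trig_coeffs N \<inter> {x. trig_L1_norm N x \<le> 1}" using x by (simp add: trig_coeffs_def)
  qed
  ultimately show ?thesis by (simp add: compact_Int_closed closed_trig_L1_norm_le)
qed

text \<open>By self-adjointness, \<open>moment_pairing a N x\<close> is the mean of \<open>g \<theta> * trig_poly N x \<theta>\<close>
  over the circle for every \<open>g \<in> G_set a N\<close>.\<close>

definition moment_pairing :: "(int \<Rightarrow> complex) \<Rightarrow> nat \<Rightarrow> (nat \<Rightarrow> real) \<Rightarrow> real" where
  "moment_pairing a N x = (\<Sum>k\<le>N. x (2*k) * Re (a (int k)) - x (2*k+1) * Im (a (int k)))"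

lemma moment_pairing_add_scaled:
  "moment_pairing a N (\<lambda>i. x i + t * y i) = moment_pairing a N x + t * moment_pairing a N y"
  unfolding moment_pairing_def by (simp add: sum.distrib sum_distrib_left algebra_simps sum_subtractf)

lemma moment_pairing_scale: "moment_pairing a N (\<lambda>i. c * x i) = c * moment_pairing a N x"
  unfolding moment_pairing_def by (simp add: sum_distrib_left algebra_simps sum_subtractf)

lemma continuous_on_moment_pairing: "continuous_on S (moment_pairing a N)"
proof -
  have "continuous_on S (\<lambda>x::nat \<Rightarrow> real. x i)" for i
    by (rule continuous_on_subset[OF continuous_on_product_coordinates]) simp
  then show ?thesis unfolding moment_pairing_def by (intro continuous_intros)
qed

lemma moment_pairing_unit_coeff_cos: "k \<le> N \<Longrightarrow> moment_pairing a N (unit_coeff (2*k)) = Re (a (int k))"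
proof -
  assume k: "k \<le> N"
  have "moment_pairing a N (unit_coeff (2*k)) = (\<Sum>j\<le>N. if j = k then Re (a (int k)) else 0)"
    unfolding moment_pairing_def unit_coeff_def by (intro sum.cong refl) auto
  then show ?thesis using k by simp
qed

lemma moment_pairing_unit_coeff_sin: "k \<le> N \<Longrightarrow> moment_pairing a N (unit_coeff (2*k+1)) = - Im (a (int k))"
proof -
  assume k: "k \<le> N"
  have "moment_pairing a N (unit_coeff (2*k+1)) = (\<Sum>j\<le>N. if j = k then - Im (a (int k)) else 0)"
    unfolding moment_pairing_def unit_coeff_def by (intro sum.cong refl) auto
  then show ?thesis using k by simp
qed

lemma data_eq_0_if_moment_pairing_eq_0:
  assumes selfadj: "\<And>n. \<bar>n\<bar> \<le> int N \<Longrightarrow> a (- n) = cnj (a n)"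
    and zero: "\<forall>x\<in>trig_coeffs N. moment_pairing a N x = 0" and n: "\<bar>n\<bar> \<le> int N"
  shows "a n = 0"
proof -
  have nonneg: "a (int k) = 0" if k: "k \<le> N" for k
  proof -
    have "Re (a (int k)) = 0"
      using zero unit_coeff_cos_in_trig_coeffs[OF k] moment_pairing_unit_coeff_cos[OF k] by metis
    moreover have "Im (a (int k)) = 0"
    proof (cases "k = 0")
      case True
      then show ?thesis using selfadj[of 0] by (simp add: complex_eq_iff)
    next
      case False
      then show ?thesis
        using zero unit_coeff_sin_in_trig_coeffs[OF k False] moment_pairing_unit_coeff_sin[OF k] by fastforce
    qed
    ultimately show ?thesis by (simp add: complex_eq_iff)
  qed
  show ?thesis
  proof (cases "n \<ge> 0")
    case True
    then show ?thesis using nonneg[of "nat n"] n by simp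
  next
    case False
    then have "a n = cnj (a (- n))" using selfadj[of "- n"] n by simp
    then show ?thesis using nonneg[of "nat (- n)"] n False by simp
  qed
qed

lemma integral_G_set_exp:
  assumes "g \<in> G_set a N" "\<bar>n\<bar> \<le> int N"
  shows "(LINT \<theta>|circ. g \<theta> * exp (- \<i> * of_int n * complex_of_real \<theta>)) = complex_of_real (2*pi) * a n"
  using assms pi_gt_zero unfolding G_set_def fourier_coeff_def by (auto simp: field_simps)

lemma integral_G_set_cos:
  assumes g: "g \<in> G_set a N" and selfadj: "\<And>n. \<bar>n\<bar> \<le> int N \<Longrightarrow> a (- n) = cnj (a n)"
    and k: "k \<le> N"
  shows "(LINT \<theta>|circ. cos (real k * \<theta>) *\<^sub>R g \<theta>) = complex_of_real (2*pi * Re (a (int k)))"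
proof -
  let ?e = "\<lambda>n \<theta>. g \<theta> * exp (- \<i> * of_int n * complex_of_real \<theta>)"
  have int: "integrable circ (?e n)" for n
    by (intro integrable_in_Linf_mult[where C=1] G_set_in_Linf[OF g])
       (auto intro!: continuous_intros simp: norm_exp_eq_Re)
  have "cos (real k * \<theta>) *\<^sub>R g \<theta> = (?e (int k) \<theta> + ?e (- int k) \<theta>) / 2" for \<theta>
    by (simp add: scaleR_conv_of_real cos_of_real[symmetric] cos_exp_eq field_simps)
  then have "(LINT \<theta>|circ. cos (real k * \<theta>) *\<^sub>R g \<theta>) = (LINT \<theta>|circ. (?e (int k) \<theta> + ?e (- int k) \<theta>) / 2)"
    by (simp only:)
  also have "\<dots> = ((LINT \<theta>|circ. ?e (int k) \<theta>) + (LINT \<theta>|circ. ?e (- int k) \<theta>)) / 2"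
    by (simp only: integral_divide_zero Bochner_Integration.integral_add[OF int int])
  also have "\<dots> = complex_of_real (2*pi * Re (a (int k)))"
    using integral_G_set_exp[OF g, of "int k"] integral_G_set_exp[OF g, of "- int k"] selfadj[of "int k"] k
    by (simp add: complex_eq_iff)
  finally show ?thesis .
qed

lemma integral_G_set_sin:
  assumes g: "g \<in> G_set a N" and selfadj: "\<And>n. \<bar>n\<bar> \<le> int N \<Longrightarrow> a (- n) = cnj (a n)"
    and k: "k \<le> N"
  shows "(LINT \<theta>|circ. sin (real k * \<theta>) *\<^sub>R g \<theta>) = complex_of_real (- 2*pi * Im (a (int k)))"
proof -
  let ?e = "\<lambda>n \<theta>. g \<theta> * exp (- \<i> * of_int n * complex_of_real \<theta>)"
  have int: "integrable circ (?e n)" for n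
    by (intro integrable_in_Linf_mult[where C=1] G_set_in_Linf[OF g])
       (auto intro!: continuous_intros simp: norm_exp_eq_Re)
  have "sin (real k * \<theta>) *\<^sub>R g \<theta> = (?e (- int k) \<theta> - ?e (int k) \<theta>) / (2 * \<i>)" for \<theta>
    by (simp add: scaleR_conv_of_real sin_of_real[symmetric] sin_exp_eq field_simps)
  then have "(LINT \<theta>|circ. sin (real k * \<theta>) *\<^sub>R g \<theta>) = (LINT \<theta>|circ. (?e (- int k) \<theta> - ?e (int k) \<theta>) / (2 * \<i>))"
    by (simp only:)
  also have "\<dots> = ((LINT \<theta>|circ. ?e (- int k) \<theta>) - (LINT \<theta>|circ. ?e (int k) \<theta>)) / (2 * \<i>)"
    by (simp only: integral_divide_zero Bochner_Integration.integral_diff[OF int int])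
  also have "\<dots> = complex_of_real (2*pi) * ((cnj (a (int k)) - a (int k)) / (2 * \<i>))"
    using integral_G_set_exp[OF g, of "int k"] integral_G_set_exp[OF g, of "- int k"] selfadj[of "int k"] k
    by (simp add: diff_divide_distrib right_diff_distrib)
  also have "\<dots> = complex_of_real (- 2*pi * Im (a (int k)))"
    by (simp add: complex_eq_iff)
  finally show ?thesis .
qed

lemma integral_G_set_trig_poly:
  assumes g: "g \<in> G_set a N" and selfadj: "\<And>n. \<bar>n\<bar> \<le> int N \<Longrightarrow> a (- n) = cnj (a n)"
  shows "(LINT \<theta>|circ. trig_poly N x \<theta> *\<^sub>R g \<theta>) = complex_of_real (2*pi * moment_pairing a N x)"
proof -
  have "integrable circ (\<lambda>\<theta>. cos (real k * \<theta>) *\<^sub>R g \<theta>)" "integrable circ (\<lambda>\<theta>. sin (real k * \<theta>) *\<^sub>R g \<theta>)" for k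
    by (rule integrable_scaleR_in_Linf[OF G_set_in_Linf[OF g], where C=1]; auto intro!: continuous_intros)+
  then have "(LINT \<theta>|circ. trig_poly N x \<theta> *\<^sub>R g \<theta>) =
          (\<Sum>k\<le>N. x (2*k) *\<^sub>R complex_of_real (2*pi * Re (a (int k))) +
                   x (2*k+1) *\<^sub>R complex_of_real (- 2*pi * Im (a (int k))))"
    by (simp add: integral_trig_poly_scaleR integral_G_set_cos[OF g selfadj] integral_G_set_sin[OF g selfadj])
  also have "\<dots> = complex_of_real (2*pi * moment_pairing a N x)"
    unfolding moment_pairing_def by (simp add: scaleR_conv_of_real sum_distrib_left algebra_simps)
  finally show ?thesis .
qed

lemma exists_maximizer_moment_pairing:
  "\<exists>p\<in>trig_coeffs N. trig_L1_norm N p \<le> 1 \<and>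
     (\<forall>x\<in>trig_coeffs N. moment_pairing a N x \<le> moment_pairing a N p * trig_L1_norm N x)"
proof -
  let ?B = "trig_coeffs N \<inter> {x. trig_L1_norm N x \<le> 1}"
  have "(\<lambda>i. 0) \<in> ?B" unfolding trig_coeffs_def trig_L1_norm_def trig_poly_def by simp
  then obtain p where p: "p \<in> ?B" and max: "\<And>y. y \<in> ?B \<Longrightarrow> moment_pairing a N y \<le> moment_pairing a N p"
    using continuous_attains_sup[of ?B "moment_pairing a N"] compact_trig_L1_ball continuous_on_moment_pairing
    by blast
  have "moment_pairing a N x \<le> moment_pairing a N p * trig_L1_norm N x" if x: "x \<in> trig_coeffs N" for x
  proof (cases "trig_L1_norm N x = 0")
    case True
    then have "x = (\<lambda>i. 0)" using abs_coeff_le_trig_L1_norm[OF x] by fastforce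
    then show ?thesis by (simp add: moment_pairing_def trig_L1_norm_def trig_poly_def)
  next
    case False
    then have pos: "trig_L1_norm N x > 0" using trig_L1_norm_nonneg[of N x] by linarith
    define y where "y = (\<lambda>i. (1 / trig_L1_norm N x) * x i)"
    have "trig_L1_norm N y = 1" unfolding y_def trig_L1_norm_scale using pos by simp
    moreover have "y \<in> trig_coeffs N" unfolding y_def by (rule trig_coeffs_scale[OF x])
    ultimately have "moment_pairing a N y \<le> moment_pairing a N p" by (intro max) simp
    then have "moment_pairing a N x / trig_L1_norm N x \<le> moment_pairing a N p"
      unfolding y_def moment_pairing_scale by simp
    then show ?thesis using pos by (simp add: pos_divide_le_eq mult.commute)
  qed
  then show ?thesis using p by blast
qed

lemma exists_extremal_trig_poly:
  assumes selfadj: "\<And>n. \<bar>n\<bar> \<le> int N \<Longrightarrow> a (- n) = cnj (a n)"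
    and nonzero: "\<exists>n. \<bar>n\<bar> \<le> int N \<and> a n \<noteq> 0"
  shows "\<exists>p\<in>trig_coeffs N. trig_L1_norm N p = 1 \<and> 0 < moment_pairing a N p \<and>
           (\<forall>x\<in>trig_coeffs N. moment_pairing a N x \<le> moment_pairing a N p * trig_L1_norm N x)"
proof -
  obtain p where p: "p \<in> trig_coeffs N" "trig_L1_norm N p \<le> 1"
    and max: "\<forall>x\<in>trig_coeffs N. moment_pairing a N x \<le> moment_pairing a N p * trig_L1_norm N x"
    using exists_maximizer_moment_pairing by blast
  have pos: "0 < moment_pairing a N p"
  proof (rule ccontr)
    assume "\<not> 0 < moment_pairing a N p"
    then have upper: "moment_pairing a N x \<le> 0" if "x \<in> trig_coeffs N" for x
      using max that trig_L1_norm_nonneg[of N x] by (meson mult_nonpos_nonneg not_less order_trans)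
    have "moment_pairing a N x = 0" if x: "x \<in> trig_coeffs N" for x
      using upper[OF x] upper[OF trig_coeffs_scale[OF x, of "-1"]] moment_pairing_scale[of a N "-1" x]
      by simp
    then show False using nonzero data_eq_0_if_moment_pairing_eq_0[of N a, OF selfadj] by blast
  qed
  have "moment_pairing a N p \<le> moment_pairing a N p * trig_L1_norm N p" using max p(1) by blast
  then have "trig_L1_norm N p = 1" using pos p(2) by simp
  then show ?thesis using p(1) pos max by blast
qed

lemma tendsto_abs_difference_quotient:
  fixes A B :: real
  assumes "A \<noteq> 0" "\<And>n. t n > 0" "t \<longlonglongrightarrow> 0"
  shows "(\<lambda>n. (\<bar>A + t n * B\<bar> - \<bar>A\<bar>) / t n) \<longlonglongrightarrow> sgn A * B"
proof (rule tendsto_eventually)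
  have "(\<lambda>n. t n * \<bar>B\<bar>) \<longlonglongrightarrow> 0 * \<bar>B\<bar>" by (intro tendsto_intros assms(3))
  then have "eventually (\<lambda>n. t n * \<bar>B\<bar> < \<bar>A\<bar>) sequentially"
    using assms(1) by (intro order_tendstoD(2)) auto
  then show "eventually (\<lambda>n. (\<bar>A + t n * B\<bar> - \<bar>A\<bar>) / t n = sgn A * B) sequentially"
  proof (rule eventually_mono)
    fix n assume small: "t n * \<bar>B\<bar> < \<bar>A\<bar>"
    have "\<bar>t n * B\<bar> < \<bar>A\<bar>" using small assms(2)[of n] by (simp add: abs_mult)
    then have "\<bar>A + t n * B\<bar> = sgn A * (A + t n * B)"
      by (cases "A > 0") (auto simp: sgn_if abs_if split: if_splits)
    then show "(\<bar>A + t n * B\<bar> - \<bar>A\<bar>) / t n = sgn A * B"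
      using assms(2)[of n] abs_sgn[of A] by (simp add: algebra_simps)
  qed
qed

lemma tendsto_integral_abs_difference_quotient:
  fixes P Q :: "'a \<Rightarrow> real"
  assumes P: "integrable M P" and Q: "integrable M Q" and nonzero: "AE x in M. P x \<noteq> 0"
    and t: "\<And>n. t n > 0" "t \<longlonglongrightarrow> 0"
  shows "(\<lambda>n. ((LINT x|M. \<bar>P x + t n * Q x\<bar>) - (LINT x|M. \<bar>P x\<bar>)) / t n) \<longlonglongrightarrow> (LINT x|M. sgn (P x) * Q x)"
proof -
  define s where "s n x = (\<bar>P x + t n * Q x\<bar> - \<bar>P x\<bar>) / t n" for n x
  have "(\<lambda>n. LINT x|M. s n x) \<longlonglongrightarrow> (LINT x|M. sgn (P x) * Q x)"
  proof (rule integral_dominated_convergence[where w="\<lambda>x. \<bar>Q x\<bar>"])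
    show "(\<lambda>x. sgn (P x) * Q x) \<in> borel_measurable M" "s n \<in> borel_measurable M" for n
      using borel_measurable_integrable[OF P] borel_measurable_integrable[OF Q] unfolding s_def by measurable
    show "integrable M (\<lambda>x. \<bar>Q x\<bar>)" using Q by auto
    show "AE x in M. (\<lambda>n. s n x) \<longlonglongrightarrow> sgn (P x) * Q x"
      using nonzero by (rule eventually_mono) (unfold s_def, rule tendsto_abs_difference_quotient, use t in auto)
    show "AE x in M. norm (s n x) \<le> \<bar>Q x\<bar>" for n
    proof (rule AE_I2)
      fix x
      have "\<bar>\<bar>P x + t n * Q x\<bar> - \<bar>P x\<bar>\<bar> \<le> t n * \<bar>Q x\<bar>"
        using abs_triangle_ineq3[of "P x + t n * Q x" "P x"] t(1)[of n] by (simp add: abs_mult)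
      then show "norm (s n x) \<le> \<bar>Q x\<bar>"
        unfolding s_def using t(1)[of n] by (simp add: pos_divide_le_eq mult.commute)
    qed
  qed
  moreover have "(LINT x|M. s n x) = ((LINT x|M. \<bar>P x + t n * Q x\<bar>) - (LINT x|M. \<bar>P x\<bar>)) / t n" for n
    unfolding s_def using P Q by (simp add: Bochner_Integration.integral_diff)
  ultimately show ?thesis by simp
qed

section \<open>Sign patterns of continuous periodic functions\<close>

lemma sgn_eq_if_no_zero_between:
  fixes P :: "real \<Rightarrow> real"
  assumes cont: "continuous_on {x..y} P" and "x \<le> y" and nz: "\<forall>t\<in>{x..y}. P t \<noteq> 0"
  shows "sgn (P y) = sgn (P x)"
proof (rule ccontr)
  assume "sgn (P y) \<noteq> sgn (P x)"
  moreover have "P x \<noteq> 0" "P y \<noteq> 0" using nz \<open>x \<le> y\<close> by auto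
  ultimately consider "P x < 0" "0 < P y" | "0 < P x" "P y < 0"
    by (metis linorder_neqE_linordered_idom sgn_neg sgn_pos)
  then obtain t where "x \<le> t" "t \<le> y" "P t = 0"
  proof cases
    case 1 then show ?thesis using IVT'[of P x 0 y] cont \<open>x \<le> y\<close> that by auto
  next
    case 2 then show ?thesis using IVT2'[of P y 0 x] cont \<open>x \<le> y\<close> that by auto
  qed
  then show False using nz by auto
qed

definition sign_partition :: "(real \<Rightarrow> real) \<Rightarrow> real \<Rightarrow> real \<Rightarrow> nat \<Rightarrow> (nat \<Rightarrow> real) \<Rightarrow> bool" where
  "sign_partition P a b r c \<longleftrightarrow> c 0 = a \<and> c (Suc r) = b \<and> (\<forall>i\<le>r. c i < c (Suc i)) \<and>
     (\<forall>i\<le>r. \<forall>x. c i < x \<and> x < c (Suc i) \<and> P x \<noteq> 0 \<longrightarrow> sgn (P x) = sgn (P a) * (-1)^i) \<and>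
     sgn (P b) = sgn (P a) * (-1)^r"

lemma sign_partition_extend_last_piece:
  fixes P :: "real \<Rightarrow> real"
  assumes part: "sign_partition P a e r c" and "e < b" "P b \<noteq> 0"
    and after_e: "\<And>x. e < x \<Longrightarrow> x \<le> b \<Longrightarrow> P x \<noteq> 0 \<Longrightarrow> sgn (P x) = sgn (P e)"
  shows "sign_partition P a b r (c(Suc r := b))"
proof -
  have c: "c 0 = a" "c (Suc r) = e" "\<forall>i\<le>r. c i < c (Suc i)"
    and pieces: "\<forall>i\<le>r. \<forall>x. c i < x \<and> x < c (Suc i) \<and> P x \<noteq> 0 \<longrightarrow> sgn (P x) = sgn (P a) * (-1)^i"
    and Pe: "sgn (P e) = sgn (P a) * (-1)^r"
    using part unfolding sign_partition_def by auto
  show ?thesis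
    unfolding sign_partition_def
  proof (intro conjI allI impI)
    show "(c(Suc r := b)) 0 = a" "(c(Suc r := b)) (Suc r) = b" using c(1) by simp_all
    show "sgn (P b) = sgn (P a) * (-1)^r" using after_e[of b] \<open>e < b\<close> \<open>P b \<noteq> 0\<close> Pe by simp
    fix i assume i: "i \<le> r"
    show "(c(Suc r := b)) i < (c(Suc r := b)) (Suc i)"
      using c i \<open>e < b\<close> by (cases "i = r") auto
    fix x assume x: "(c(Suc r := b)) i < x \<and> x < (c(Suc r := b)) (Suc i) \<and> P x \<noteq> 0"
    consider "i < r" | "i = r" "x < e" | "i = r" "x = e" | "i = r" "e < x" using i by fastforce
    then show "sgn (P x) = sgn (P a) * (-1)^i"
    proof cases
      case 1 then show ?thesis using pieces x by auto
    next
      case 2 then show ?thesis using pieces x c(2) by auto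
    next
      case 3 then show ?thesis using Pe by simp
    next
      case 4 then show ?thesis using after_e[of x] x Pe by simp
    qed
  qed
qed

lemma sign_partition_add_piece:
  fixes P :: "real \<Rightarrow> real"
  assumes part: "sign_partition P a e r c" and "e < z" "z < b" "P b \<noteq> 0"
    and before_z: "\<And>x. e < x \<Longrightarrow> x < z \<Longrightarrow> P x \<noteq> 0 \<Longrightarrow> sgn (P x) = sgn (P e)"
    and after_z: "\<And>x. z < x \<Longrightarrow> x \<le> b \<Longrightarrow> P x \<noteq> 0 \<Longrightarrow> sgn (P x) = - sgn (P e)"
  shows "sign_partition P a b (Suc r) (c(Suc r := z, Suc (Suc r) := b))"
proof -
  let ?c = "c(Suc r := z, Suc (Suc r) := b)"
  have c: "c 0 = a" "c (Suc r) = e" "\<forall>i\<le>r. c i < c (Suc i)"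
    and pieces: "\<forall>i\<le>r. \<forall>x. c i < x \<and> x < c (Suc i) \<and> P x \<noteq> 0 \<longrightarrow> sgn (P x) = sgn (P a) * (-1)^i"
    and Pe: "sgn (P e) = sgn (P a) * (-1)^r"
    using part unfolding sign_partition_def by auto
  show ?thesis
    unfolding sign_partition_def
  proof (intro conjI allI impI)
    show "?c 0 = a" "?c (Suc (Suc r)) = b" using c(1) by simp_all
    show "sgn (P b) = sgn (P a) * (-1)^Suc r" using after_z[of b] assms(2-4) Pe by simp
    fix i assume i: "i \<le> Suc r"
    show "?c i < ?c (Suc i)"
      using c i assms(2,3) by (cases "i = r"; cases "i = Suc r") auto
    fix x assume x: "?c i < x \<and> x < ?c (Suc i) \<and> P x \<noteq> 0"
    consider "i < r" | "i = r" "x < e" | "i = r" "x = e" | "i = r" "e < x" | "i = Suc r"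
      using i by fastforce
    then show "sgn (P x) = sgn (P a) * (-1)^i"
    proof cases
      case 1 then show ?thesis using pieces x by auto
    next
      case 2 then show ?thesis using pieces x c(2) by auto
    next
      case 3 then show ?thesis using Pe by simp
    next
      case 4 then show ?thesis using before_z[of x] x Pe by simp
    next
      case 5 then show ?thesis using after_z[of x] x Pe by simp
    qed
  qed
qed

lemma sign_partition_extend:
  fixes P :: "real \<Rightarrow> real"
  assumes cont: "continuous_on UNIV P" and part: "sign_partition P a e r c"
    and z: "e < z" "z < b" and Pb: "P b \<noteq> 0"
    and no_zero: "\<And>x. e \<le> x \<Longrightarrow> x \<le> b \<Longrightarrow> x \<noteq> z \<Longrightarrow> P x \<noteq> 0"
  shows "\<exists>r' c'. r' \<le> Suc r \<and> sign_partition P a b r' c'"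
proof -
  have sgn_eq: "sgn (P y) = sgn (P x)" if "x \<le> y" "\<And>t. x \<le> t \<Longrightarrow> t \<le> y \<Longrightarrow> P t \<noteq> 0" for x y
    using sgn_eq_if_no_zero_between[OF continuous_on_subset[OF cont]] that by auto
  have before_z: "sgn (P x) = sgn (P e)" if "e < x" "x \<le> z" "P x \<noteq> 0" for x
  proof (rule sgn_eq)
    fix t assume t: "e \<le> t" "t \<le> x"
    show "P t \<noteq> 0"
    proof (cases "t = z")
      case True
      then have "t = x" using t that by linarith
      then show ?thesis using that by simp
    qed (use t that z no_zero in auto)
  qed (use that in auto)
  have after_z: "sgn (P x) = sgn (P b)" if "z < x" "x \<le> b" for x
    using that z no_zero by (intro sgn_eq[symmetric]) auto
  have "P e \<noteq> 0" by (rule no_zero) (use z in auto)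
  show ?thesis
  proof (cases "sgn (P e) = sgn (P b)")
    case True
    have "sgn (P x) = sgn (P e)" if "e < x" "x \<le> b" "P x \<noteq> 0" for x
      using before_z[of x] after_z[of x] that True by (cases "x \<le> z") auto
    then have "sign_partition P a b r (c(Suc r := b))"
      using z by (intro sign_partition_extend_last_piece[OF part _ Pb]) auto
    then show ?thesis by (intro exI[of _ r] exI[of _ "c(Suc r := b)"]) simp
  next
    case False
    then have "sgn (P b) = - sgn (P e)"
      using \<open>P e \<noteq> 0\<close> Pb by (auto simp: sgn_if split: if_splits)
    then have "sgn (P x) = - sgn (P e)" if "z < x" "x \<le> b" for x
      using after_z[OF that] by simp
    then have "sign_partition P a b (Suc r) (c(Suc r := z, Suc (Suc r) := b))"
      using before_z by (intro sign_partition_add_piece[OF part z Pb]) auto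
    then show ?thesis by (intro exI[of _ "Suc r"] exI) simp
  qed
qed

lemma exists_gap_below:
  fixes Z :: "real set"
  assumes "finite Z" "a < z"
  shows "\<exists>e. a < e \<and> e < z \<and> (\<forall>y\<in>Z. e \<le> y \<longrightarrow> z \<le> y)"
proof -
  define w where "w = Max (insert a {y\<in>Z. y < z})"
  have "w \<in> insert a {y\<in>Z. y < z}" unfolding w_def using assms(1) by (intro Max_in) auto
  then have w: "a \<le> w" "w < z" using assms by (auto simp: w_def)
  have "y \<le> w" if "y \<in> Z" "y < z" for y unfolding w_def using assms(1) that by (intro Max_ge) auto
  then show ?thesis using w by (intro exI[of _ "(w + z) / 2"]) force
qed

lemma exists_sign_partition:
  fixes P :: "real \<Rightarrow> real"
  assumes cont: "continuous_on UNIV P"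
  shows "a < b \<Longrightarrow> P a \<noteq> 0 \<Longrightarrow> P b \<noteq> 0 \<Longrightarrow> finite {x\<in>{a<..<b}. P x = 0} \<Longrightarrow>
    card {x\<in>{a<..<b}. P x = 0} = n \<Longrightarrow> \<exists>r c. r \<le> n \<and> sign_partition P a b r c"
proof (induction n arbitrary: b rule: less_induct)
  case (less n)
  let ?Z = "{x\<in>{a<..<b}. P x = 0}"
  show ?case
  proof (cases "?Z = {}")
    case True
    have nz: "P t \<noteq> 0" if "a \<le> t" "t \<le> b" for t
      using True less.prems(2,3) that by (cases "t = a \<or> t = b") auto
    have same_sign: "sgn (P x) = sgn (P a)" if "a \<le> x" "x \<le> b" for x
      using that nz by (intro sgn_eq_if_no_zero_between[OF continuous_on_subset[OF cont]]) auto
    have "sign_partition P a b 0 (\<lambda>i. if i = 0 then a else b)"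
      unfolding sign_partition_def
      using less.prems(1) same_sign[of b] by (auto intro!: same_sign)
    then show ?thesis by blast
  next
    case False
    have fin: "finite ?Z" using less.prems(4) .
    define z where "z = Max ?Z"
    have z: "z \<in> ?Z" "\<And>y. y \<in> ?Z \<Longrightarrow> y \<le> z"
      using Max_in[OF fin False] Max_ge[OF fin] unfolding z_def by auto
    then obtain e where e: "a < e" "e < z" and gap: "\<And>y. y \<in> ?Z \<Longrightarrow> e \<le> y \<Longrightarrow> z \<le> y"
      using exists_gap_below[OF fin, of a z] by auto
    have no_zero: "P x \<noteq> 0" if "e \<le> x" "x \<le> b" "x \<noteq> z" for x
    proof
      assume "P x = 0"
      then have "x \<in> ?Z" using that e less.prems(3) by (auto simp: le_less)
      then have "z \<le> x" "x \<le> z" using gap z(2) that(1) by auto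
      then show False using that(3) by simp
    qed
    have "{x\<in>{a<..<e}. P x = 0} = ?Z - {z}"
      using gap z e by force
    moreover have card: "card (?Z - {z}) < n"
      using card_Diff1_less[OF fin z(1)] less.prems(5) by simp
    ultimately obtain r c where "r \<le> card (?Z - {z})" "sign_partition P a e r c"
      using less.IH[OF card e(1) less.prems(2) no_zero[of e]] e z fin by auto
    moreover obtain r' c' where "r' \<le> Suc r" "sign_partition P a b r' c'"
      using sign_partition_extend[OF cont \<open>sign_partition P a e r c\<close> e(2) _ less.prems(3) no_zero] z by auto
    ultimately show ?thesis using card by (intro exI[of _ r'] exI[of _ c']) simp
  qed
qed

lemma exists_shift_into_period:
  "\<exists>m::int. \<alpha> < \<theta> + 2*pi*m \<and> \<theta> + 2*pi*m \<le> \<alpha> + 2*pi"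
proof -
  define m where "m = \<lfloor>(\<alpha> - \<theta>) / (2*pi)\<rfloor> + 1"
  have "real_of_int m - 1 \<le> (\<alpha> - \<theta>) / (2*pi)" "(\<alpha> - \<theta>) / (2*pi) < real_of_int m"
    unfolding m_def by linarith+
  then have "2*pi*(real_of_int m - 1) \<le> \<alpha> - \<theta>" "\<alpha> - \<theta> < 2*pi*real_of_int m"
    using pi_gt_zero by (simp_all add: field_simps)
  then show ?thesis by (intro exI[of _ m]) (simp add: algebra_simps)
qed

locale periodic_sign_partition =
  fixes P :: "real \<Rightarrow> real" and \<alpha> :: real and r :: nat and c :: "nat \<Rightarrow> real"
  assumes periodic: "\<And>\<theta> m. P (\<theta> + 2*pi*real_of_int m) = P \<theta>"
    and negative: "P \<alpha> < 0"
    and partition: "sign_partition P \<alpha> (\<alpha> + 2*pi) r c"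
begin

lemma c_0: "c 0 = \<alpha>" and c_end: "c (Suc r) = \<alpha> + 2*pi"
  and c_mono: "\<And>i. i \<le> r \<Longrightarrow> c i < c (Suc i)"
  and sgn_piece: "\<And>i x. i \<le> r \<Longrightarrow> c i < x \<Longrightarrow> x < c (Suc i) \<Longrightarrow> P x \<noteq> 0 \<Longrightarrow> sgn (P x) = - ((-1)^i)"
  using partition negative unfolding sign_partition_def by auto

lemma even_r: "even r"
proof -
  have "P (\<alpha> + 2*pi) = P \<alpha>" using periodic[of \<alpha> 1] by simp
  then have "(-1::real)^r = 1" using partition negative unfolding sign_partition_def by simp
  then show ?thesis by (metis neg_one_odd_power one_neq_neg_one)
qed

lemma sgn_shift: "sgn (P (\<theta> + 2*pi*real_of_int m)) = sgn (P \<theta>)"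
  using periodic by simp

lemma sgn_eq_minus_one_if_r_eq_0:
  assumes "r = 0" and nz: "P \<theta> \<noteq> 0"
  shows "sgn (P \<theta>) = -1"
proof -
  obtain m :: int where m: "\<alpha> < \<theta> + 2*pi*m" "\<theta> + 2*pi*m \<le> \<alpha> + 2*pi"
    using exists_shift_into_period by blast
  have "sgn (P (\<theta> + 2*pi*m)) = -1"
  proof (cases "\<theta> + 2*pi*m = \<alpha> + 2*pi")
    case True
    then show ?thesis using periodic[of \<alpha> 1] negative by simp
  next
    case False
    then show ?thesis
      using sgn_piece[of 0 "\<theta> + 2*pi*m"] m c_0 c_end assms nz periodic by simp
  qed
  then show ?thesis using sgn_shift by simp
qed

text \<open>Rotating the partition to start at \<open>c 1\<close> makes the first piece positive.\<close>

definition breakpoint :: "nat \<Rightarrow> real" where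
  "breakpoint k = (if k < r then c (Suc k) else c 1 + 2*pi)"

lemma breakpoint_mono:
  assumes "k < r"
  shows "breakpoint k < breakpoint (Suc k)"
proof (cases "Suc k < r")
  case True
  then show ?thesis using c_mono[of "Suc k"] by (simp add: breakpoint_def)
next
  case False
  then have "Suc k = r" using assms by simp
  then show ?thesis using c_mono[of r] c_mono[of 0] c_0 c_end assms by (simp add: breakpoint_def)
qed

lemma sgn_between_breakpoints:
  assumes "0 < r" "k < r" "breakpoint k < x" "x < breakpoint (Suc k)" "P x \<noteq> 0"
  shows "sgn (P x) = (-1)^k"
proof (cases "Suc k < r")
  case True
  then show ?thesis using sgn_piece[of "Suc k" x] assms by (simp add: breakpoint_def)
next
  case False
  then have k: "Suc k = r" using assms(2) by simp
  then have odd: "(-1::real)^k = -1" using even_r by (metis even_Suc neg_one_odd_power)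
  have x: "c r < x" "x < c 1 + 2*pi" using assms(3,4) k by (auto simp: breakpoint_def)
  consider "x < \<alpha> + 2*pi" | "x = \<alpha> + 2*pi" | "\<alpha> + 2*pi < x" by linarith
  then show ?thesis
  proof cases
    case 1
    then show ?thesis using sgn_piece[of r x] x assms(5) c_end odd even_r by simp
  next
    case 2
    then show ?thesis using periodic[of \<alpha> 1] negative odd by simp
  next
    case 3
    have "P (x - 2*pi) = P x" using periodic[of "x - 2*pi" 1] by simp
    moreover have "c 0 < x - 2*pi" "x - 2*pi < c (Suc 0)" using 3 x c_0 by auto
    ultimately show ?thesis using sgn_piece[of 0 "x - 2*pi"] assms(5) odd by simp
  qed
qed

lemma alt_step_sgn:
  assumes "0 < r" "0 < M" and nonzero: "AE \<theta> in circ. P \<theta> \<noteq> 0"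
  shows "alt_step M (r div 2) (\<lambda>\<theta>. complex_of_real (M * sgn (P \<theta>)))"
  unfolding alt_step_def
proof (intro conjI exI[of _ breakpoint])
  have r: "2 * (r div 2) = r" using even_r by simp
  show "0 < M" "1 \<le> r div 2" using assms(1,2) even_r by auto
  show "\<forall>k<2 * (r div 2). breakpoint k < breakpoint (Suc k)"
    using breakpoint_mono r by simp
  show "breakpoint (2 * (r div 2)) = breakpoint 0 + 2*pi"
    using r assms(1) by (simp add: breakpoint_def)
  show "AE \<theta> in circ. \<forall>k<2 * (r div 2). (\<exists>m::int. breakpoint k < \<theta> + 2*pi*m \<and> \<theta> + 2*pi*m < breakpoint (Suc k))
          \<longrightarrow> complex_of_real (M * sgn (P \<theta>)) = complex_of_real ((-1)^k * M)"
    using nonzero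
  proof (rule eventually_mono, intro allI impI)
    fix \<theta> k assume nz: "P \<theta> \<noteq> 0" and k: "k < 2 * (r div 2)"
      and "\<exists>m::int. breakpoint k < \<theta> + 2*pi*m \<and> \<theta> + 2*pi*m < breakpoint (Suc k)"
    then obtain m :: int where "breakpoint k < \<theta> + 2*pi*m" "\<theta> + 2*pi*m < breakpoint (Suc k)" by blast
    moreover have "P (\<theta> + 2*pi*m) \<noteq> 0" using nz periodic by simp
    ultimately have "sgn (P (\<theta> + 2*pi*m)) = (-1)^k"
      using sgn_between_breakpoints[OF assms(1), of k] k r by simp
    then show "complex_of_real (M * sgn (P \<theta>)) = complex_of_real ((-1)^k * M)"
      using sgn_shift by (simp add: mult.commute)
  qed
qed

end

lemma const_or_alt_step_sgn:
  fixes P :: "real \<Rightarrow> real"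
  assumes cont: "continuous_on UNIV P" and periodic: "\<And>\<theta> m. P (\<theta> + 2*pi*real_of_int m) = P \<theta>"
    and finite_zeros: "\<And>\<alpha>. finite {\<theta>\<in>{\<alpha><..<\<alpha>+2*pi}. P \<theta> = 0}"
    and card_zeros: "\<And>\<alpha>. card {\<theta>\<in>{\<alpha><..<\<alpha>+2*pi}. P \<theta> = 0} \<le> 2*N"
    and nonzero: "AE \<theta> in circ. P \<theta> \<noteq> 0" and "0 < M"
  shows "(\<exists>c. \<bar>c\<bar> = M \<and> const_ae c (\<lambda>\<theta>. complex_of_real (M * sgn (P \<theta>)))) \<or>
         (\<exists>n. 1 \<le> n \<and> n \<le> N \<and> alt_step M n (\<lambda>\<theta>. complex_of_real (M * sgn (P \<theta>))))"
proof (cases "\<forall>t. P t \<ge> 0")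
  case True
  have "const_ae M (\<lambda>\<theta>. complex_of_real (M * sgn (P \<theta>)))"
    unfolding const_ae_def using nonzero
    by (rule eventually_mono) (use True in \<open>auto simp: order_neq_le_trans\<close>)
  then show ?thesis using \<open>0 < M\<close> by auto
next
  case False
  then obtain \<alpha> where "P \<alpha> < 0" by (auto simp: not_le)
  moreover have "P (\<alpha> + 2*pi) = P \<alpha>" using periodic[of \<alpha> 1] by simp
  ultimately obtain r c where "r \<le> card {\<theta>\<in>{\<alpha><..<\<alpha>+2*pi}. P \<theta> = 0}"
      and "sign_partition P \<alpha> (\<alpha> + 2*pi) r c"
    using exists_sign_partition[OF cont _ _ _ finite_zeros refl] pi_gt_zero by force
  then have r: "r \<le> 2*N" using card_zeros[of \<alpha>] by linarith
  interpret periodic_sign_partition P \<alpha> r c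
    using periodic \<open>P \<alpha> < 0\<close> \<open>sign_partition P \<alpha> (\<alpha> + 2*pi) r c\<close> by unfold_locales
  show ?thesis
  proof (cases "r = 0")
    case True
    have "const_ae (- M) (\<lambda>\<theta>. complex_of_real (M * sgn (P \<theta>)))"
      unfolding const_ae_def using nonzero
      by (rule eventually_mono) (simp add: sgn_eq_minus_one_if_r_eq_0[OF True])
    then show ?thesis using \<open>0 < M\<close> by (intro disjI1 exI[of _ "- M"]) auto
  next
    case False
    then have "alt_step M (r div 2) (\<lambda>\<theta>. complex_of_real (M * sgn (P \<theta>)))" "1 \<le> r div 2" "r div 2 \<le> N"
      using alt_step_sgn[OF _ \<open>0 < M\<close> nonzero] r even_r by auto
    then show ?thesis by blast
  qed
qed

section \<open>The extremal function\<close>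

lemma eq_of_real_if_Re_eq_norm_bound:
  fixes w :: complex
  assumes "cmod w \<le> r" "Re w = r"
  shows "w = complex_of_real r"
proof -
  have "(Re w)\<^sup>2 + (Im w)\<^sup>2 \<le> r\<^sup>2"
    using power_mono[OF assms(1) norm_ge_zero, of 2] by (simp add: cmod_power2)
  then have "Im w = 0" using assms(2) by (simp add: power2_less_eq_zero_iff)
  then show ?thesis using assms(2) by (simp add: complex_eq_iff)
qed

lemma eq_of_real_sgn_if_Re_scaleR_eq:
  fixes z :: complex
  assumes "s \<noteq> 0" "cmod z \<le> r" "Re (s *\<^sub>R z) = r * \<bar>s\<bar>"
  shows "z = complex_of_real (r * sgn s)"
proof -
  have "Re (sgn s *\<^sub>R z) = Re (s *\<^sub>R z) / \<bar>s\<bar>" by (simp add: real_sgn_eq)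
  then have "Re (sgn s *\<^sub>R z) = r" using assms(1,3) by simp
  moreover have "cmod (sgn s *\<^sub>R z) \<le> r" using assms(1,2) by (simp add: abs_sgn_eq)
  ultimately have eq: "sgn s *\<^sub>R z = complex_of_real r" by (intro eq_of_real_if_Re_eq_norm_bound)
  have "z = (sgn s * sgn s) *\<^sub>R z" using assms(1) by (simp add: sgn_if)
  also have "\<dots> = sgn s *\<^sub>R complex_of_real r" by (simp only: scaleR_scaleR[symmetric] eq)
  finally show ?thesis by (simp add: scaleR_conv_of_real mult.commute)
qed

locale extremal_trig_poly =
  fixes a :: "int \<Rightarrow> complex" and N :: nat and p :: "nat \<Rightarrow> real"
  assumes selfadj: "\<And>n. \<bar>n\<bar> \<le> int N \<Longrightarrow> a (- n) = cnj (a n)"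
    and p_coeffs: "p \<in> trig_coeffs N" and p_norm: "trig_L1_norm N p = 1"
    and p_pos: "0 < moment_pairing a N p"
    and p_max: "\<forall>x\<in>trig_coeffs N. moment_pairing a N x \<le> moment_pairing a N p * trig_L1_norm N x"
begin

definition extremal_fun :: "real \<Rightarrow> complex" where
  "extremal_fun \<theta> = complex_of_real (moment_pairing a N p * sgn (trig_poly N p \<theta>))"

lemma trig_poly_not_zero: "\<exists>t. trig_poly N p t \<noteq> 0"
proof (rule ccontr)
  assume "\<nexists>t. trig_poly N p t \<noteq> 0"
  then have "trig_L1_norm N p = 0" unfolding trig_L1_norm_def by simp
  then show False using p_norm by simp
qed

lemma AE_trig_poly_p_nonzero: "AE \<theta> in circ. trig_poly N p \<theta> \<noteq> 0"
  by (rule AE_trig_poly_nonzero[OF trig_poly_not_zero])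

lemma moment_pairing_le_integral_sgn:
  assumes q: "q \<in> trig_coeffs N"
  shows "moment_pairing a N q \<le>
           moment_pairing a N p * ((LINT \<theta>|circ. sgn (trig_poly N p \<theta>) * trig_poly N q \<theta>) / (2*pi))"
proof -
  let ?M = "moment_pairing a N p"
  define t where "t n = 1 / (real n + 1)" for n :: nat
  have t: "t n > 0" "t \<longlonglongrightarrow> 0" for n
    unfolding t_def using LIMSEQ_inverse_real_of_nat by (auto simp: inverse_eq_divide add.commute)
  define d where "d n = ((LINT \<theta>|circ. \<bar>trig_poly N p \<theta> + t n * trig_poly N q \<theta>\<bar>) -
                          (LINT \<theta>|circ. \<bar>trig_poly N p \<theta>\<bar>)) / t n" for n
  have norm_p: "(LINT \<theta>|circ. \<bar>trig_poly N p \<theta>\<bar>) = 2*pi"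
    using p_norm unfolding trig_L1_norm_def by simp
  have "moment_pairing a N q \<le> ?M * (d n / (2*pi))" for n
  proof -
    have "?M + t n * moment_pairing a N q \<le> ?M * trig_L1_norm N (\<lambda>i. p i + t n * q i)"
      using p_max trig_coeffs_add_scaled[OF p_coeffs q, of "t n"] moment_pairing_add_scaled[of a N p "t n" q]
      by auto
    also have "\<dots> = ?M + t n * (?M * (d n / (2*pi)))"
      using t(1)[of n] unfolding trig_L1_norm_def d_def trig_poly_add_scaled norm_p
      by (simp add: field_simps)
    finally have "t n * moment_pairing a N q \<le> t n * (?M * (d n / (2*pi)))" by simp
    then show ?thesis using t(1)[of n] by (rule mult_left_le_imp_le)
  qed
  moreover have "d \<longlonglongrightarrow> (LINT \<theta>|circ. sgn (trig_poly N p \<theta>) * trig_poly N q \<theta>)"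
    unfolding d_def
    by (rule tendsto_integral_abs_difference_quotient[OF _ _ AE_trig_poly_p_nonzero t]) auto
  then have "(\<lambda>n. ?M * (d n / (2*pi))) \<longlonglongrightarrow>
               ?M * ((LINT \<theta>|circ. sgn (trig_poly N p \<theta>) * trig_poly N q \<theta>) / (2*pi))"
    by (intro tendsto_intros) auto
  ultimately show ?thesis by (intro LIMSEQ_le_const) auto
qed

lemma moment_pairing_eq_integral_sgn:
  assumes q: "q \<in> trig_coeffs N"
  shows "moment_pairing a N q =
           moment_pairing a N p * ((LINT \<theta>|circ. sgn (trig_poly N p \<theta>) * trig_poly N q \<theta>) / (2*pi))"
  using moment_pairing_le_integral_sgn[OF q] moment_pairing_le_integral_sgn[OF trig_coeffs_scale[OF q, of "-1"]]
  unfolding moment_pairing_scale trig_poly_scale by simp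


lemma borel_measurable_extremal_fun [measurable]: "extremal_fun \<in> borel_measurable circ"
  unfolding extremal_fun_def by measurable

lemma integral_extremal_cos:
  assumes "k \<le> N"
  shows "(LINT \<theta>|circ. moment_pairing a N p * sgn (trig_poly N p \<theta>) * cos (real k * \<theta>)) =
           2*pi * Re (a (int k))"
  using moment_pairing_eq_integral_sgn[OF unit_coeff_cos_in_trig_coeffs[OF assms]] pi_gt_zero
  unfolding moment_pairing_unit_coeff_cos[OF assms] trig_poly_unit_coeff_cos[OF assms] mult.assoc
  by simp

lemma integral_extremal_sin:
  assumes "k \<le> N"
  shows "(LINT \<theta>|circ. moment_pairing a N p * sgn (trig_poly N p \<theta>) * sin (real k * \<theta>)) =
           - 2*pi * Im (a (int k))"
proof (cases "k = 0")
  case True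
  then show ?thesis using selfadj[of 0] by (simp add: complex_eq_iff)
next
  case False
  show ?thesis
    using moment_pairing_eq_integral_sgn[OF unit_coeff_sin_in_trig_coeffs[OF assms False]] pi_gt_zero
    unfolding moment_pairing_unit_coeff_sin[OF assms] trig_poly_unit_coeff_sin[OF assms] mult.assoc
    by (simp add: field_simps)
qed

lemma fourier_coeff_extremal_fun:
  assumes n: "\<bar>n\<bar> \<le> int N"
  shows "fourier_coeff extremal_fun n = a n"
proof -
  have coeff: "fourier_coeff extremal_fun n =
      complex_of_real ((LINT \<theta>|circ. moment_pairing a N p * sgn (trig_poly N p \<theta>) * cos (of_int n * \<theta>)) / (2*pi)) -
      \<i> * complex_of_real ((LINT \<theta>|circ. moment_pairing a N p * sgn (trig_poly N p \<theta>) * sin (of_int n * \<theta>)) / (2*pi))"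
    unfolding extremal_fun_def
    by (rule fourier_coeff_of_real[where C="moment_pairing a N p"]) (use p_pos in \<open>auto simp: abs_mult sgn_if\<close>)
  show ?thesis
  proof (cases "n \<ge> 0")
    case True
    define k where "k = nat n"
    have k: "n = int k" "k \<le> N" using True n by (auto simp: k_def)
    have "fourier_coeff extremal_fun n = complex_of_real (Re (a k)) - \<i> * complex_of_real (- Im (a k))"
      unfolding coeff unfolding k(1) of_int_of_nat_eq integral_extremal_cos[OF k(2)] integral_extremal_sin[OF k(2)]
      using pi_gt_zero by simp
    also have "\<dots> = a n" using k(1) by (simp add: complex_eq_iff)
    finally show ?thesis .
  next
    case False
    define k where "k = nat (- n)"
    have k: "n = - int k" "k \<le> N" using False n by (auto simp: k_def)
    have neg: "of_int n * \<theta> = - (real k * \<theta>)" for \<theta> using k(1) by simp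
    have "fourier_coeff extremal_fun n = complex_of_real (Re (a k)) - \<i> * complex_of_real (Im (a k))"
      unfolding coeff unfolding neg cos_minus sin_minus mult_minus_right integral_minus
        integral_extremal_cos[OF k(2)] integral_extremal_sin[OF k(2)]
      using pi_gt_zero by simp
    also have "\<dots> = a n" using k selfadj[of "int k"] by (simp add: complex_eq_iff)
    finally show ?thesis .
  qed
qed

lemma linf_norm_extremal_fun: "linf_norm extremal_fun = ereal (moment_pairing a N p)"
  using AE_trig_poly_p_nonzero
  by (intro linf_norm_AE_cmod_eq borel_measurable_extremal_fun)
     (rule eventually_mono, use p_pos in \<open>auto simp: extremal_fun_def abs_mult sgn_if\<close>)

lemma extremal_fun_in_G_set: "extremal_fun \<in> G_set a N"
  unfolding G_set_def in_Linf_def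
  using linf_norm_extremal_fun fourier_coeff_extremal_fun by auto

lemma integral_G_set_trig_poly_p:
  "g \<in> G_set a N \<Longrightarrow> (LINT \<theta>|circ. trig_poly N p \<theta> *\<^sub>R g \<theta>) = complex_of_real (2*pi * moment_pairing a N p)"
  by (intro integral_G_set_trig_poly selfadj)

lemma integrable_trig_poly_p_scaleR: "g \<in> G_set a N \<Longrightarrow> integrable circ (\<lambda>\<theta>. trig_poly N p \<theta> *\<^sub>R g \<theta>)"
  by (rule integrable_scaleR_in_Linf[OF G_set_in_Linf _ abs_trig_poly_le]) (auto intro!: continuous_intros)

lemma moment_pairing_le_linf_norm:
  assumes g: "g \<in> G_set a N"
  shows "ereal (moment_pairing a N p) \<le> linf_norm g"
proof -
  let ?B = "real_of_ereal (linf_norm g)"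
  have "2*pi * moment_pairing a N p = cmod (LINT \<theta>|circ. trig_poly N p \<theta> *\<^sub>R g \<theta>)"
    unfolding integral_G_set_trig_poly_p[OF g] norm_of_real using p_pos by simp
  also have "\<dots> \<le> (LINT \<theta>|circ. cmod (trig_poly N p \<theta> *\<^sub>R g \<theta>))"
    by (rule integral_norm_bound)
  also have "\<dots> \<le> (LINT \<theta>|circ. ?B * \<bar>trig_poly N p \<theta>\<bar>)"
  proof (rule integral_mono_AE)
    show "integrable circ (\<lambda>\<theta>. cmod (trig_poly N p \<theta> *\<^sub>R g \<theta>))"
      using integrable_norm[OF integrable_trig_poly_p_scaleR[OF g]] .
    show "AE \<theta> in circ. cmod (trig_poly N p \<theta> *\<^sub>R g \<theta>) \<le> ?B * \<bar>trig_poly N p \<theta>\<bar>"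
      using in_Linf_AE_bound[OF G_set_in_Linf[OF g]]
      by (rule eventually_mono) (simp add: mult.commute mult_right_mono)
  qed auto
  also have "\<dots> = ?B * (2*pi)"
    using p_norm unfolding trig_L1_norm_def by simp
  finally have "moment_pairing a N p \<le> ?B" using pi_gt_zero by (simp add: mult.commute)
  moreover have "linf_norm g \<noteq> \<infinity>" "linf_norm g \<noteq> -\<infinity>"
    using G_set_in_Linf[OF g] linf_norm_nonneg[of g] unfolding in_Linf_def by auto
  ultimately show ?thesis by (cases "linf_norm g") auto
qed


lemma AE_eq_extremal_fun:
  assumes g: "g \<in> G_set a N" and le: "linf_norm g \<le> ereal (moment_pairing a N p)"
  shows "AE \<theta> in circ. g \<theta> = extremal_fun \<theta>"
proof -
  let ?M = "moment_pairing a N p"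
  have "real_of_ereal (linf_norm g) \<le> ?M"
    using le linf_norm_nonneg[of g] by (cases "linf_norm g") auto
  then have bound: "AE \<theta> in circ. cmod (g \<theta>) \<le> ?M"
    using in_Linf_AE_bound[OF G_set_in_Linf[OF g]] by (auto elim: eventually_mono)
  have "AE \<theta> in circ. Re (trig_poly N p \<theta> *\<^sub>R g \<theta>) = ?M * \<bar>trig_poly N p \<theta>\<bar>"
  proof (rule integral_ineq_eq_0_then_AE)
    show "AE \<theta> in circ. Re (trig_poly N p \<theta> *\<^sub>R g \<theta>) \<le> ?M * \<bar>trig_poly N p \<theta>\<bar>"
      using bound
    proof (rule eventually_mono)
      fix \<theta> assume "cmod (g \<theta>) \<le> ?M"
      then show "Re (trig_poly N p \<theta> *\<^sub>R g \<theta>) \<le> ?M * \<bar>trig_poly N p \<theta>\<bar>"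
        using complex_Re_le_cmod[of "trig_poly N p \<theta> *\<^sub>R g \<theta>"] mult_left_mono[of _ _ "\<bar>trig_poly N p \<theta>\<bar>"]
        by (simp add: order_trans mult.commute)
    qed
    show "integrable circ (\<lambda>\<theta>. Re (trig_poly N p \<theta> *\<^sub>R g \<theta>))"
      by (rule integrable_Re[OF integrable_trig_poly_p_scaleR[OF g]])
    have "(LINT \<theta>|circ. Re (trig_poly N p \<theta> *\<^sub>R g \<theta>)) = Re (LINT \<theta>|circ. trig_poly N p \<theta> *\<^sub>R g \<theta>)"
      using integral_bounded_linear[OF bounded_linear_Re integrable_trig_poly_p_scaleR[OF g]] by simp
    then show "(LINT \<theta>|circ. Re (trig_poly N p \<theta> *\<^sub>R g \<theta>)) = (LINT \<theta>|circ. ?M * \<bar>trig_poly N p \<theta>\<bar>)"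
      using p_norm unfolding integral_G_set_trig_poly_p[OF g] trig_L1_norm_def by simp
  qed auto
  then show ?thesis
    using bound AE_trig_poly_p_nonzero
  proof eventually_elim
    case (elim \<theta>)
    show ?case
      unfolding extremal_fun_def
      by (rule eq_of_real_sgn_if_Re_scaleR_eq) (use elim in \<open>auto simp: mult.commute\<close>)
  qed
qed

lemma extremal_fun_shape:
  "(\<exists>c. \<bar>c\<bar> = moment_pairing a N p \<and> const_ae c extremal_fun) \<or>
   (\<exists>n. 1 \<le> n \<and> n \<le> N \<and> alt_step (moment_pairing a N p) n extremal_fun)"
  unfolding extremal_fun_def
  by (rule const_or_alt_step_sgn[OF continuous_on_trig_poly trig_poly_periodic
        trig_poly_zeros_in_period[OF trig_poly_not_zero] AE_trig_poly_p_nonzero p_pos])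

end

lemma zero_fun_in_G_set:
  assumes "\<And>n. \<bar>n\<bar> \<le> int N \<Longrightarrow> a n = 0"
  shows "(\<lambda>_. 0) \<in> G_set a N"
  using assms unfolding G_set_def in_Linf_def by (simp add: linf_norm_zero_fun fourier_coeff_def)

theorem theorem4p1:
  fixes N :: nat and a :: "int \<Rightarrow> complex"
  assumes "N \<ge> 1"
    and selfadj: "\<And>n. \<bar>n\<bar> \<le> int N \<Longrightarrow> a (- n) = cnj (a n)"
  shows "\<exists>f \<in> G_set a N.
           (\<forall>g \<in> G_set a N. linf_norm f \<le> linf_norm g) \<and>
           (\<forall>g \<in> G_set a N. linf_norm g = linf_norm f \<longrightarrow> (AE \<theta> in circ. g \<theta> = f \<theta>)) \<and>
           ((\<exists>c. \<bar>c\<bar> = real_of_ereal (linf_norm f) \<and> const_ae c f) \<or>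
            (\<exists>n. 1 \<le> n \<and> n \<le> N \<and> alt_step (real_of_ereal (linf_norm f)) n f))"
proof (cases "\<exists>n. \<bar>n\<bar> \<le> int N \<and> a n \<noteq> 0")
  case True
  then obtain p where "p \<in> trig_coeffs N" "trig_L1_norm N p = 1" "0 < moment_pairing a N p"
      "\<forall>x\<in>trig_coeffs N. moment_pairing a N x \<le> moment_pairing a N p * trig_L1_norm N x"
    using exists_extremal_trig_poly[of N a, OF selfadj] by blast
  then interpret extremal_trig_poly a N p
    using selfadj by unfold_locales
  show ?thesis
    using extremal_fun_in_G_set moment_pairing_le_linf_norm AE_eq_extremal_fun extremal_fun_shape
    by (intro bexI[of _ extremal_fun]) (auto simp: linf_norm_extremal_fun)
next
  case False
  then have "(\<lambda>_. 0) \<in> G_set a N" by (intro zero_fun_in_G_set) auto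
  moreover have "AE \<theta> in circ. g \<theta> = 0" if "g \<in> G_set a N" "linf_norm g = 0" for g
    using that by (intro AE_eq_0_if_linf_norm_eq_0 G_set_in_Linf)
  ultimately show ?thesis
    by (intro bexI[of _ "\<lambda>_. 0"]) (auto simp: linf_norm_zero_fun linf_norm_nonneg const_ae_def)
qed

end
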